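(* Let $G$ be a connected groupoid with finite object set $G_0=\{e_1,\dots,e_r\}$, $A=\bigoplus_{i=1}^r A_i$ a unital ring with $A_i:=A_{e_i}\neq 0$ having identity $1_i$, and $\alpha=(A_g,\alpha_g)_{g\in G}$ a unital global action of $G$ on $A$. The following are equivalent: (i) $A\subset A\star_\alpha G$ is a separable extension; (ii) $G$ is finite and there exists $a\in C(A)$ such that $t_i(a)=1_i$ for all $i=1,\dots,r$.
   Context: A groupoid $G$ is a small category in which every morphism is invertible; $G_0$ is its object set (objects identified with identity morphisms), $s,t$ source and target; $gh$ is defined iff $s(g)=t(h)$; $G(e,f)$ is the set of morphisms from $e$ to $f$; $G$ is connected if $G(e,f)\neq\emptyset$ for all $e,f\in G_0$. A unital partial action of $G$ on $A$ is a family $\alpha=(A_g,\alpha_g)_{g\in G}$ where $A_{t(g)}$ is a two-sided ideal of $A$, $A_g=A1_g$ is a two-sided ideal of $A_{t(g)}$ with $1_g$ a central idempotent of $A$, $\alpha_g:A_{g^{-1}}\to A_g$ a ring isomorphism, such that $\alpha_e=\mathrm{id}_{A_e}$ for $e\in G_0$, $\alpha_h^{-1}(A_{g^{-1}}\cap A_h)\subseteq A_{(gh)^{-1}}$ and $\alpha_g(\alpha_h(x))=\alpha_{gh}(x)$ for $x\in\alpha_h^{-1}(A_{g^{-1}}\cap A_h)$, whenever $s(g)=t(h)$. It is global if $\alpha_g\alpha_h=\alpha_{gh}$ for all composable $g,h$; equivalently $A_g=A_{t(g)}$ for all $g\in G$. The skew groupoid ring $A\star_\alpha G=\bigoplus_{g\in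 G}A_g\delta_g$ has multiplication $(a_g\delta_g)(b_h\delta_h)=\alpha_g(\alpha_{g^{-1}}(a_g)b_h)\delta_{gh}$ if $s(g)=t(h)$ and $0$ otherwise; it is unital with $1=\sum_{e\in G_0}1_e\delta_e$, and $A$ is regarded as a subring via $a\mapsto\sum_{e\in G_0}(a1_e)\delta_e$. For finite $G$, trace maps: $t_{i,j}(a)=\sum_{g\in G(e_i,e_j)}\alpha_g(a1_{g^{-1}})$ and $t_j(a)=\sum_{i=1}^r t_{i,j}(a)$. $C(A)$ is the center of $A$. A ring extension $R\subseteq S$ is separable if the multiplication map $S\otimes_R S\to S$ splits as a map of $(S,S)$-bimodules; equivalently there exists $x\in S\otimes_R S$ with $m(x)=1_S$ and $sx=xs$ for all $s\in S$. *)

theory Defs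
  imports "HOL-Algebra.Ring"
begin

text \<open>A groupoid is given by its set of morphisms Gm, its set of objects G0
  (identified with identity morphisms), source and target maps, a composition
  cmp g h (meaning g after h, defined when src g = tgt h) and an inversion.\<close>

definition groupoid ::
  "'g set \<Rightarrow> 'g set \<Rightarrow> ('g \<Rightarrow> 'g) \<Rightarrow> ('g \<Rightarrow> 'g) \<Rightarrow> ('g \<Rightarrow> 'g \<Rightarrow> 'g) \<Rightarrow> ('g \<Rightarrow> 'g) \<Rightarrow> bool"
where
  "groupoid Gm G0 src tgt cmp gi \<longleftrightarrow>
     G0 \<subseteq> Gm \<and>
     (\<forall>g\<in>Gm. src g \<in> G0 \<and> tgt g \<in> G0) \<and>
     (\<forall>e\<in>G0. src e = e \<and> tgt e = e) \<and>
     (\<forall>g\<in>Gm. \<forall>h\<in>Gm. src g = tgt h \<longrightarrow>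
        cmp g h \<in> Gm \<and> src (cmp g h) = src h \<and> tgt (cmp g h) = tgt g) \<and>
     (\<forall>g\<in>Gm. \<forall>h\<in>Gm. \<forall>k\<in>Gm. src g = tgt h \<longrightarrow> src h = tgt k \<longrightarrow>
        cmp (cmp g h) k = cmp g (cmp h k)) \<and>
     (\<forall>g\<in>Gm. cmp (tgt g) g = g \<and> cmp g (src g) = g) \<and>
     (\<forall>g\<in>Gm. gi g \<in> Gm \<and> src (gi g) = tgt g \<and> tgt (gi g) = src g \<and>
        cmp g (gi g) = tgt g \<and> cmp (gi g) g = src g)"

definition hom_set :: "'g set \<Rightarrow> ('g \<Rightarrow> 'g) \<Rightarrow> ('g \<Rightarrow> 'g) \<Rightarrow> 'g \<Rightarrow> 'g \<Rightarrow> 'g set" where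
  "hom_set Gm src tgt e f = {g \<in> Gm. src g = e \<and> tgt g = f}"

definition groupoid_connected :: "'g set \<Rightarrow> 'g set \<Rightarrow> ('g \<Rightarrow> 'g) \<Rightarrow> ('g \<Rightarrow> 'g) \<Rightarrow> bool" where
  "groupoid_connected Gm G0 src tgt \<longleftrightarrow> (\<forall>e\<in>G0. \<forall>f\<in>G0. hom_set Gm src tgt e f \<noteq> {})"

definition central :: "'a::ring_1 \<Rightarrow> bool" where
  "central c \<longleftrightarrow> (\<forall>b. c * b = b * c)"

text \<open>The ideal A_g = A 1_g, where u g is the central idempotent 1_g.\<close>
definition ideal_of :: "('g \<Rightarrow> 'a::ring_1) \<Rightarrow> 'g \<Rightarrow> 'a set" where
  "ideal_of u g = {a * u g | a. True}"

definition ring_iso_betw :: "('a::ring_1 \<Rightarrow> 'a) \<Rightarrow> 'a set \<Rightarrow> 'a set \<Rightarrow> bool" where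
  "ring_iso_betw f X Y \<longleftrightarrow> bij_betw f X Y \<and>
     (\<forall>x\<in>X. \<forall>y\<in>X. f (x + y) = f x + f y \<and> f (x * y) = f x * f y)"

definition unital_partial_action ::
  "'g set \<Rightarrow> 'g set \<Rightarrow> ('g \<Rightarrow> 'g) \<Rightarrow> ('g \<Rightarrow> 'g) \<Rightarrow> ('g \<Rightarrow> 'g \<Rightarrow> 'g) \<Rightarrow> ('g \<Rightarrow> 'g)
   \<Rightarrow> ('g \<Rightarrow> 'a::ring_1) \<Rightarrow> ('g \<Rightarrow> 'a \<Rightarrow> 'a) \<Rightarrow> bool"
where
  "unital_partial_action Gm G0 src tgt cmp gi u \<alpha> \<longleftrightarrow>
     (\<forall>g\<in>Gm. central (u g) \<and> u g * u g = u g) \<and>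
     (\<forall>g\<in>Gm. ideal_of u g \<subseteq> ideal_of u (tgt g)) \<and>
     (\<forall>g\<in>Gm. ring_iso_betw (\<alpha> g) (ideal_of u (gi g)) (ideal_of u g)) \<and>
     (\<forall>e\<in>G0. \<forall>x\<in>ideal_of u e. \<alpha> e x = x) \<and>
     (\<forall>g\<in>Gm. \<forall>h\<in>Gm. src g = tgt h \<longrightarrow>
        (\<forall>x\<in>ideal_of u (gi h). \<alpha> h x \<in> ideal_of u (gi g) \<inter> ideal_of u h \<longrightarrow>
           x \<in> ideal_of u (gi (cmp g h)) \<and> \<alpha> g (\<alpha> h x) = \<alpha> (cmp g h) x))"

definition unital_global_action ::
  "'g set \<Rightarrow> 'g set \<Rightarrow> ('g \<Rightarrow> 'g) \<Rightarrow> ('g \<Rightarrow> 'g) \<Rightarrow> ('g \<Rightarrow> 'g \<Rightarrow> 'g) \<Rightarrow> ('g \<Rightarrow> 'g)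
   \<Rightarrow> ('g \<Rightarrow> 'a::ring_1) \<Rightarrow> ('g \<Rightarrow> 'a \<Rightarrow> 'a) \<Rightarrow> bool"
where
  "unital_global_action Gm G0 src tgt cmp gi u \<alpha> \<longleftrightarrow>
     unital_partial_action Gm G0 src tgt cmp gi u \<alpha> \<and>
     (\<forall>g\<in>Gm. ideal_of u g = ideal_of u (tgt g))"

text \<open>Elements are finitely supported functions f on morphisms with f g in A_g,
  i.e. the formal sums of f g delta_g.\<close>
definition skew_carrier :: "'g set \<Rightarrow> ('g \<Rightarrow> 'a::ring_1) \<Rightarrow> ('g \<Rightarrow> 'a) set" where
  "skew_carrier Gm u = {f. finite {g. f g \<noteq> 0} \<and> (\<forall>g. f g \<noteq> 0 \<longrightarrow> g \<in> Gm) \<and>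
                            (\<forall>g\<in>Gm. f g \<in> ideal_of u g)}"

definition skew_mult ::
  "'g set \<Rightarrow> ('g \<Rightarrow> 'g) \<Rightarrow> ('g \<Rightarrow> 'g) \<Rightarrow> ('g \<Rightarrow> 'g \<Rightarrow> 'g) \<Rightarrow> ('g \<Rightarrow> 'g)
   \<Rightarrow> ('g \<Rightarrow> 'a \<Rightarrow> 'a) \<Rightarrow> ('g \<Rightarrow> 'a::ring_1) \<Rightarrow> ('g \<Rightarrow> 'a) \<Rightarrow> ('g \<Rightarrow> 'a)"
where
  "skew_mult Gm src tgt cmp gi \<alpha> f f' = (\<lambda>k.
     \<Sum>(g, h) \<in> {(g, h). g \<in> Gm \<and> h \<in> Gm \<and> f g \<noteq> 0 \<and> f' h \<noteq> 0 \<and>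
                        src g = tgt h \<and> cmp g h = k}.
        \<alpha> g (\<alpha> (gi g) (f g) * f' h))"

definition skew_groupoid_ring ::
  "'g set \<Rightarrow> 'g set \<Rightarrow> ('g \<Rightarrow> 'g) \<Rightarrow> ('g \<Rightarrow> 'g) \<Rightarrow> ('g \<Rightarrow> 'g \<Rightarrow> 'g) \<Rightarrow> ('g \<Rightarrow> 'g)
   \<Rightarrow> ('g \<Rightarrow> 'a::ring_1) \<Rightarrow> ('g \<Rightarrow> 'a \<Rightarrow> 'a) \<Rightarrow> ('g \<Rightarrow> 'a) ring"
where
  "skew_groupoid_ring Gm G0 src tgt cmp gi u \<alpha> =
     \<lparr> carrier = skew_carrier Gm u,
       monoid.mult = skew_mult Gm src tgt cmp gi \<alpha>,
       one = (\<lambda>g. if g \<in> G0 then u g else 0),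
       zero = (\<lambda>g. 0),
       add = (\<lambda>f f' g. f g + f' g) \<rparr>"

text \<open>A regarded as a subring: a maps to the sum over objects e of (a 1_e) delta_e.\<close>
definition skew_embed :: "'g set \<Rightarrow> ('g \<Rightarrow> 'a::ring_1) \<Rightarrow> 'a \<Rightarrow> ('g \<Rightarrow> 'a)" where
  "skew_embed G0 u a = (\<lambda>g. if g \<in> G0 then a * u g else 0)"

text \<open>The tensor product S (x)_R S is the free abelian group on S x S
  (finitely supported integer-valued functions on pairs) modulo the subgroup
  generated by the biadditivity and R-balancedness relations.\<close>

definition single :: "'x \<Rightarrow> ('x \<Rightarrow> int)" where
  "single p = (\<lambda>q. if q = p then 1 else 0)"

inductive_set tensor_rel :: "('b, 'm) ring_scheme \<Rightarrow> 'b set \<Rightarrow> ('b \<times> 'b \<Rightarrow> int) set"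
  for S :: "('b, 'm) ring_scheme" and R :: "'b set"
where
  tr_zero: "(\<lambda>p. 0) \<in> tensor_rel S R"
| tr_add: "x \<in> tensor_rel S R \<Longrightarrow> y \<in> tensor_rel S R \<Longrightarrow> (\<lambda>p. x p + y p) \<in> tensor_rel S R"
| tr_neg: "x \<in> tensor_rel S R \<Longrightarrow> (\<lambda>p. - x p) \<in> tensor_rel S R"
| tr_addl: "u \<in> carrier S \<Longrightarrow> u' \<in> carrier S \<Longrightarrow> v \<in> carrier S \<Longrightarrow>
    (\<lambda>p. single (u \<oplus>\<^bsub>S\<^esub> u', v) p - single (u, v) p - single (u', v) p) \<in> tensor_rel S R"
| tr_addr: "u \<in> carrier S \<Longrightarrow> v \<in> carrier S \<Longrightarrow> v' \<in> carrier S \<Longrightarrow>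
    (\<lambda>p. single (u, v \<oplus>\<^bsub>S\<^esub> v') p - single (u, v) p - single (u, v') p) \<in> tensor_rel S R"
| tr_bal: "u \<in> carrier S \<Longrightarrow> v \<in> carrier S \<Longrightarrow> r \<in> R \<Longrightarrow>
    (\<lambda>p. single (u \<otimes>\<^bsub>S\<^esub> r, v) p - single (u, r \<otimes>\<^bsub>S\<^esub> v) p) \<in> tensor_rel S R"

definition formal_sums :: "('b, 'm) ring_scheme \<Rightarrow> ('b \<times> 'b \<Rightarrow> int) set" where
  "formal_sums S = {x. finite {p. x p \<noteq> 0} \<and> {p. x p \<noteq> 0} \<subseteq> carrier S \<times> carrier S}"

definition fs_map :: "('b \<times> 'b \<Rightarrow> 'b \<times> 'b) \<Rightarrow> ('b \<times> 'b \<Rightarrow> int) \<Rightarrow> ('b \<times> 'b \<Rightarrow> int)" where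
  "fs_map \<phi> x = (\<lambda>p. \<Sum>q\<in>{q. x q \<noteq> 0 \<and> \<phi> q = p}. x q)"

definition tensor_mult :: "('b, 'm) ring_scheme \<Rightarrow> ('b \<times> 'b \<Rightarrow> int) \<Rightarrow> 'b" where
  "tensor_mult S x = (\<Oplus>\<^bsub>S\<^esub> p\<in>{p. x p \<noteq> 0}. add_pow S (x p) (fst p \<otimes>\<^bsub>S\<^esub> snd p))"

text \<open>R \<subseteq> S is separable iff there is x in S (x)_R S with m(x) = 1 and
  s x = x s for all s in S.\<close>
definition separable_extension :: "('b, 'm) ring_scheme \<Rightarrow> 'b set \<Rightarrow> bool" where
  "separable_extension S R \<longleftrightarrow>
     (\<exists>x\<in>formal_sums S. tensor_mult S x = \<one>\<^bsub>S\<^esub> \<and>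
        (\<forall>s\<in>carrier S.
           (\<lambda>p. fs_map (\<lambda>(a, b). (s \<otimes>\<^bsub>S\<^esub> a, b)) x p - fs_map (\<lambda>(a, b). (a, b \<otimes>\<^bsub>S\<^esub> s)) x p)
             \<in> tensor_rel S R))"

definition trace_map ::
  "'g set \<Rightarrow> 'g set \<Rightarrow> ('g \<Rightarrow> 'g) \<Rightarrow> ('g \<Rightarrow> 'g) \<Rightarrow> ('g \<Rightarrow> 'g) \<Rightarrow> ('g \<Rightarrow> 'a::ring_1)
   \<Rightarrow> ('g \<Rightarrow> 'a \<Rightarrow> 'a) \<Rightarrow> 'g \<Rightarrow> 'a \<Rightarrow> 'a"
where
  "trace_map Gm G0 src tgt gi u \<alpha> ej a =
     (\<Sum>ei\<in>G0. \<Sum>g\<in>hom_set Gm src tgt ei ej. \<alpha> g (a * u (gi g)))"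

end

theory Submission
  imports Defs
begin

text \<open>
  A separability element \<open>x = \<Sum> a\<^sub>i \<otimes> b\<^sub>i\<close> of \<open>A \<subseteq> A \<star> G\<close> has coefficients
  \<open>c(g, h) = \<Sum> \<alpha>\<^sub>g\<^sub>\<inverse>(a\<^sub>i(g)) b\<^sub>i(h)\<close>, well defined because these maps are \<open>A\<close>-balanced.
  Commuting \<open>x\<close> with \<open>\<delta>\<^sub>k\<close> gives \<open>c(k\<inverse>g, h) = c(g, hk\<inverse>)\<close>, commuting with \<open>A\<close> makes every
  \<open>c(e, e)\<close> central, and \<open>m(x) = 1\<close> reads \<open>1\<^sub>e = \<Sum>\<^sub>t\<^sub>(\<^sub>g\<^sub>)\<^sub>=\<^sub>e \<alpha>\<^sub>g(c(g, g\<inverse>))\<close>. Hence some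
  \<open>c(g\<^sub>0, g\<^sub>0\<inverse>)\<close> is nonzero; its translates \<open>c(k\<inverse>g\<^sub>0, g\<^sub>0\<inverse>k)\<close> are nonzero at distinct places,
  so only finitely many \<open>k\<close> end in \<open>t(g\<^sub>0)\<close>, and by connectedness \<open>G\<close> is finite. Then
  \<open>a = \<Sum>\<^sub>e c(e, e)\<close> is central with \<open>a 1\<^sub>s\<^sub>(\<^sub>g\<^sub>) = c(g, g\<inverse>)\<close>, so \<open>t\<^sub>e(a) = 1\<^sub>e\<close>.

  Conversely, for such \<open>a\<close> the element \<open>\<Sum>\<^sub>g \<delta>\<^sub>g \<otimes> a 1\<^sub>s\<^sub>(\<^sub>g\<^sub>) \<delta>\<^sub>g\<^sub>\<inverse>\<close> has product \<open>\<Sum>\<^sub>e t\<^sub>e(a) \<delta>\<^sub>e = 1\<close>.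
  It commutes with every element since, by additivity, it suffices to check monomials
  \<open>c \<delta>\<^sub>k\<close>: reindexing \<open>g \<mapsto> kg\<close> matches the terms of the two products, and corresponding terms
  differ by one balancing step.
\<close>

definition fs_sum :: "('x \<Rightarrow> int) \<Rightarrow> ('x \<Rightarrow> 'b::ring_1) \<Rightarrow> 'b" where
  "fs_sum x h = (\<Sum>p\<in>{p. x p \<noteq> 0}. of_int (x p) * h p)"

abbreviation finite_supp :: "('x \<Rightarrow> int) \<Rightarrow> bool" where
  "finite_supp x \<equiv> finite {p. x p \<noteq> 0}"

lemma finite_supp_add: "finite_supp x \<Longrightarrow> finite_supp y \<Longrightarrow> finite_supp (\<lambda>p. x p + y p)"
  by (rule finite_subset[of _ "{p. x p \<noteq> 0} \<union> {p. y p \<noteq> 0}"]) auto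

lemma finite_supp_diff: "finite_supp x \<Longrightarrow> finite_supp y \<Longrightarrow> finite_supp (\<lambda>p. x p - y p)"
  by (rule finite_subset[of _ "{p. x p \<noteq> 0} \<union> {p. y p \<noteq> 0}"]) auto

lemma finite_supp_single [simp]: "finite_supp (single q)"
  unfolding single_def by simp

lemma finite_supp_sum:
  "(\<And>i. i \<in> I \<Longrightarrow> finite_supp (F i)) \<Longrightarrow> finite_supp (\<lambda>p. \<Sum>i\<in>I. F i p)"
  by (induction I rule: infinite_finite_induct) (auto intro: finite_supp_add)

lemma fs_map_support: "{p. fs_map \<phi> x p \<noteq> 0} \<subseteq> \<phi> ` {p. x p \<noteq> 0}"
proof
  fix p assume "p \<in> {p. fs_map \<phi> x p \<noteq> 0}"
  then have "{q. x q \<noteq> 0 \<and> \<phi> q = p} \<noteq> {}" unfolding fs_map_def by force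
  then show "p \<in> \<phi> ` {p. x p \<noteq> 0}" by blast
qed

lemma finite_supp_fs_map: "finite_supp x \<Longrightarrow> finite_supp (fs_map \<phi> x)"
  using fs_map_support finite_subset by blast

lemma fs_sum_superset:
  assumes "finite A" "{p. x p \<noteq> 0} \<subseteq> A"
  shows "fs_sum x h = (\<Sum>p\<in>A. of_int (x p) * h p)"
  unfolding fs_sum_def by (rule sum.mono_neutral_left) (use assms in auto)

lemma fs_sum_cong: "(\<And>p. x p \<noteq> 0 \<Longrightarrow> h p = h' p) \<Longrightarrow> fs_sum x h = fs_sum x h'"
  unfolding fs_sum_def by (rule sum.cong) auto

lemma fs_sum_nonzeroE:
  assumes "fs_sum x h \<noteq> 0"
  obtains p where "x p \<noteq> 0" "h p \<noteq> 0"
  using assms unfolding fs_sum_def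
  by (elim sum.not_neutral_contains_not_neutral) (auto intro: that)

lemma fs_sum_zero [simp]: "fs_sum (\<lambda>p. 0) h = 0"
  unfolding fs_sum_def by simp

lemma fs_sum_single [simp]: "fs_sum (single q) h = h q"
proof -
  have "{p. single q p \<noteq> 0} = {q}" unfolding single_def by auto
  then show ?thesis unfolding fs_sum_def by (simp add: single_def)
qed

lemma fs_sum_add:
  assumes "finite_supp x" "finite_supp y"
  shows "fs_sum (\<lambda>p. x p + y p) h = fs_sum x h + fs_sum y h"
proof -
  let ?A = "{p. x p \<noteq> 0} \<union> {p. y p \<noteq> 0}"
  have A: "finite ?A" using assms by simp
  have "fs_sum (\<lambda>p. x p + y p) h = (\<Sum>p\<in>?A. of_int (x p + y p) * h p)"
    by (rule fs_sum_superset[OF A]) auto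
  also have "\<dots> = (\<Sum>p\<in>?A. of_int (x p) * h p) + (\<Sum>p\<in>?A. of_int (y p) * h p)"
    by (simp add: distrib_right sum.distrib)
  also have "\<dots> = fs_sum x h + fs_sum y h"
    by (simp add: fs_sum_superset[OF A])
  finally show ?thesis .
qed

lemma fs_sum_neg: "fs_sum (\<lambda>p. - x p) h = - fs_sum x h"
  unfolding fs_sum_def by (simp add: sum_negf)

lemma fs_sum_diff:
  assumes "finite_supp x" "finite_supp y"
  shows "fs_sum (\<lambda>p. x p - y p) h = fs_sum x h - fs_sum y h"
  using fs_sum_add[of x "\<lambda>p. - y p" h] assms by (simp add: fs_sum_neg)

lemma fs_sum_sum_left:
  assumes "\<And>i. i \<in> I \<Longrightarrow> finite_supp (F i)"
  shows "fs_sum (\<lambda>p. \<Sum>i\<in>I. F i p) h = (\<Sum>i\<in>I. fs_sum (F i) h)"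
  using assms
proof (induction I rule: infinite_finite_induct)
  case (insert i I)
  have "fs_sum (\<lambda>p. \<Sum>i\<in>insert i I. F i p) h = fs_sum (\<lambda>p. F i p + (\<Sum>i\<in>I. F i p)) h"
    using insert.hyps by simp
  also have "\<dots> = fs_sum (F i) h + fs_sum (\<lambda>p. \<Sum>i\<in>I. F i p) h"
    by (rule fs_sum_add) (auto intro!: finite_supp_sum insert.prems)
  finally show ?case using insert by simp
qed simp_all

lemma fs_sum_sum_right: "fs_sum x (\<lambda>p. \<Sum>i\<in>I. H i p) = (\<Sum>i\<in>I. fs_sum x (H i))"
  unfolding fs_sum_def by (simp add: sum_distrib_left sum.swap[of _ I])

lemma fs_sum_mult_left: "fs_sum x (\<lambda>p. b * h p) = b * fs_sum x h"
  unfolding fs_sum_def sum_distrib_left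
  by (rule sum.cong[OF refl]) (metis mult.assoc mult_of_int_commute)

lemma fs_sum_mult_right: "fs_sum x (\<lambda>p. h p * b) = fs_sum x h * b"
  unfolding fs_sum_def by (simp add: sum_distrib_right mult.assoc)

lemma fs_sum_fs_map:
  assumes "finite_supp x"
  shows "fs_sum (fs_map \<phi> x) h = fs_sum x (\<lambda>q. h (\<phi> q))"
proof -
  let ?A = "\<phi> ` {p. x p \<noteq> 0}"
  have "fs_sum (fs_map \<phi> x) h = (\<Sum>p\<in>?A. of_int (fs_map \<phi> x p) * h p)"
    using assms fs_map_support by (intro fs_sum_superset) auto
  also have "\<dots> = (\<Sum>p\<in>?A. \<Sum>q\<in>{q \<in> {q. x q \<noteq> 0}. \<phi> q = p}. of_int (x q) * h (\<phi> q))"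
    unfolding fs_map_def by (intro sum.cong) (auto simp: sum_distrib_right intro!: sum.cong)
  also have "\<dots> = fs_sum x (\<lambda>q. h (\<phi> q))"
    unfolding fs_sum_def by (rule sum.group) (use assms in auto)
  finally show ?thesis .
qed

lemma fs_map_eq_fs_sum:
  assumes "finite_supp x"
  shows "fs_map \<phi> x p = fs_sum x (\<lambda>q. if \<phi> q = p then 1 else 0)"
proof -
  have "fs_map \<phi> x p = (\<Sum>q\<in>{q \<in> {q. x q \<noteq> 0}. \<phi> q = p}. x q)"
    unfolding fs_map_def by (rule sum.cong) auto
  also have "\<dots> = (\<Sum>q\<in>{q. x q \<noteq> 0}. if \<phi> q = p then x q else 0)"
    by (rule sum.inter_filter[OF assms])
  finally show ?thesis
    unfolding fs_sum_def by (simp add: if_distrib cong: if_cong)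
qed

lemma fs_map_sum_single:
  assumes "finite I"
  shows "fs_map \<phi> (\<lambda>p. \<Sum>i\<in>I. single (P i) p) = (\<lambda>p. \<Sum>i\<in>I. single (\<phi> (P i)) p)"
proof
  fix p
  have "fs_map \<phi> (\<lambda>p. \<Sum>i\<in>I. single (P i) p) p
      = (\<Sum>i\<in>I. fs_sum (single (P i)) (\<lambda>q. if \<phi> q = p then 1 else 0))"
    by (simp add: fs_map_eq_fs_sum finite_supp_sum fs_sum_sum_left)
  then show "fs_map \<phi> (\<lambda>p. \<Sum>i\<in>I. single (P i) p) p = (\<Sum>i\<in>I. single (\<phi> (P i)) p)"
    by (simp only: fs_sum_single) (simp add: single_def eq_commute)
qed

section \<open>Balanced maps and the tensor relation\<close>

definition balanced_map :: "('b, 'm) ring_scheme \<Rightarrow> 'b set \<Rightarrow> ('b \<times> 'b \<Rightarrow> 'c::ring_1) \<Rightarrow> bool" where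
  "balanced_map S R \<phi> \<longleftrightarrow>
     (\<forall>a\<in>carrier S. \<forall>a'\<in>carrier S. \<forall>b\<in>carrier S. \<phi> (a \<oplus>\<^bsub>S\<^esub> a', b) = \<phi> (a, b) + \<phi> (a', b)) \<and>
     (\<forall>a\<in>carrier S. \<forall>b\<in>carrier S. \<forall>b'\<in>carrier S. \<phi> (a, b \<oplus>\<^bsub>S\<^esub> b') = \<phi> (a, b) + \<phi> (a, b')) \<and>
     (\<forall>a\<in>carrier S. \<forall>b\<in>carrier S. \<forall>r\<in>R. \<phi> (a \<otimes>\<^bsub>S\<^esub> r, b) = \<phi> (a, r \<otimes>\<^bsub>S\<^esub> b))"

lemma tensor_rel_finite_supp: "x \<in> tensor_rel S R \<Longrightarrow> finite_supp x"
  by (induction rule: tensor_rel.induct)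
    (simp_all only: finite_supp_add finite_supp_diff finite_supp_single, simp_all)

lemma fs_sum_tensor_rel:
  assumes "x \<in> tensor_rel S R" and \<phi>: "balanced_map S R \<phi>"
  shows "fs_sum x \<phi> = 0"
  using assms(1)
proof (induction rule: tensor_rel.induct)
  case (tr_add x y)
  then show ?case by (simp add: fs_sum_add tensor_rel_finite_supp)
next
  case (tr_neg x)
  then show ?case by (simp add: fs_sum_neg)
qed (use \<phi> in \<open>simp_all only: fs_sum_diff finite_supp_diff finite_supp_single fs_sum_single,
       simp_all add: balanced_map_def\<close>)

lemma fs_sum_commutator:
  assumes x: "finite_supp x" and \<phi>: "balanced_map S R \<phi>"
    and comm: "(\<lambda>p. fs_map (\<lambda>(a, b). (s \<otimes>\<^bsub>S\<^esub> a, b)) x p - fs_map (\<lambda>(a, b). (a, b \<otimes>\<^bsub>S\<^esub> s)) x p)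
                 \<in> tensor_rel S R"
  shows "fs_sum x (\<lambda>q. \<phi> (s \<otimes>\<^bsub>S\<^esub> fst q, snd q)) = fs_sum x (\<lambda>q. \<phi> (fst q, snd q \<otimes>\<^bsub>S\<^esub> s))"
proof -
  have "fs_sum (fs_map (\<lambda>(a, b). (s \<otimes>\<^bsub>S\<^esub> a, b)) x) \<phi> - fs_sum (fs_map (\<lambda>(a, b). (a, b \<otimes>\<^bsub>S\<^esub> s)) x) \<phi> = 0"
    using fs_sum_tensor_rel[OF comm \<phi>] by (simp add: fs_sum_diff finite_supp_fs_map x)
  then show ?thesis
    by (simp add: fs_sum_fs_map x split_beta)
qed

lemma tensor_rel_sum:
  "(\<And>i. i \<in> I \<Longrightarrow> F i \<in> tensor_rel S R) \<Longrightarrow> (\<lambda>p. \<Sum>i\<in>I. F i p) \<in> tensor_rel S R"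
  by (induction I rule: infinite_finite_induct) (auto intro: tensor_rel.intros)

lemma tensor_rel_diff:
  "x \<in> tensor_rel S R \<Longrightarrow> y \<in> tensor_rel S R \<Longrightarrow> (\<lambda>p. x p - y p) \<in> tensor_rel S R"
  using tensor_rel.tr_add[OF _ tensor_rel.tr_neg, of x S R y] by simp

lemma tensor_rel_sum_diff_filter:
  assumes "finite I"
    and "\<And>i. i \<in> I \<Longrightarrow> P i \<Longrightarrow> (\<lambda>p. F i p - G i p) \<in> tensor_rel S R"
    and "\<And>i. i \<in> I \<Longrightarrow> \<not> P i \<Longrightarrow> F i \<in> tensor_rel S R"
  shows "(\<lambda>p. (\<Sum>i\<in>I. F i p) - (\<Sum>i\<in>{i \<in> I. P i}. G i p)) \<in> tensor_rel S R"
proof -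
  have "(\<lambda>p. \<Sum>i\<in>I. F i p - (if P i then G i p else 0)) \<in> tensor_rel S R"
  proof (rule tensor_rel_sum)
    fix i assume i: "i \<in> I"
    show "(\<lambda>p. F i p - (if P i then G i p else 0)) \<in> tensor_rel S R"
      using assms(2,3)[OF i] by (cases "P i") simp_all
  qed
  then show ?thesis
    using assms(1) by (simp add: sum_subtractf sum.inter_filter)
qed

lemma tensor_rel_zero_left:
  fixes S (structure)
  assumes "abelian_group S" "v \<in> carrier S"
  shows "single (\<zero>, v) \<in> tensor_rel S R"
proof -
  interpret abelian_group S by fact
  have "(\<lambda>p. single (\<zero> \<oplus> \<zero>, v) p - single (\<zero>, v) p - single (\<zero>, v) p) \<in> tensor_rel S R"
    by (rule tensor_rel.tr_addl) (simp_all add: assms)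
  from tensor_rel.tr_neg[OF this] show ?thesis by simp
qed

lemma tensor_rel_zero_right:
  fixes S (structure)
  assumes "abelian_group S" "v \<in> carrier S"
  shows "single (v, \<zero>) \<in> tensor_rel S R"
proof -
  interpret abelian_group S by fact
  have "(\<lambda>p. single (v, \<zero> \<oplus> \<zero>) p - single (v, \<zero>) p - single (v, \<zero>) p) \<in> tensor_rel S R"
    by (rule tensor_rel.tr_addr) (simp_all add: assms)
  from tensor_rel.tr_neg[OF this] show ?thesis by simp
qed

locale groupoid_structure =
  fixes Gm G0 :: "'g set"
    and src tgt gi :: "'g \<Rightarrow> 'g"
    and cmp :: "'g \<Rightarrow> 'g \<Rightarrow> 'g"
  assumes groupoid: "groupoid Gm G0 src tgt cmp gi"
begin

lemma obj_in_Gm: "e \<in> G0 \<Longrightarrow> e \<in> Gm"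
  using groupoid unfolding groupoid_def by blast

lemma src_in_G0 [simp]: "g \<in> Gm \<Longrightarrow> src g \<in> G0"
  and tgt_in_G0 [simp]: "g \<in> Gm \<Longrightarrow> tgt g \<in> G0"
  and src_obj [simp]: "e \<in> G0 \<Longrightarrow> src e = e"
  and tgt_obj [simp]: "e \<in> G0 \<Longrightarrow> tgt e = e"
  and cmp_in_Gm [simp]: "g \<in> Gm \<Longrightarrow> h \<in> Gm \<Longrightarrow> src g = tgt h \<Longrightarrow> cmp g h \<in> Gm"
  and src_cmp [simp]: "g \<in> Gm \<Longrightarrow> h \<in> Gm \<Longrightarrow> src g = tgt h \<Longrightarrow> src (cmp g h) = src h"
  and tgt_cmp [simp]: "g \<in> Gm \<Longrightarrow> h \<in> Gm \<Longrightarrow> src g = tgt h \<Longrightarrow> tgt (cmp g h) = tgt g"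
  and cmp_tgt [simp]: "g \<in> Gm \<Longrightarrow> cmp (tgt g) g = g"
  and cmp_src [simp]: "g \<in> Gm \<Longrightarrow> cmp g (src g) = g"
  and inv_in_Gm [simp]: "g \<in> Gm \<Longrightarrow> gi g \<in> Gm"
  and src_inv [simp]: "g \<in> Gm \<Longrightarrow> src (gi g) = tgt g"
  and tgt_inv [simp]: "g \<in> Gm \<Longrightarrow> tgt (gi g) = src g"
  and cmp_inv [simp]: "g \<in> Gm \<Longrightarrow> cmp g (gi g) = tgt g"
  and inv_cmp [simp]: "g \<in> Gm \<Longrightarrow> cmp (gi g) g = src g"
  using groupoid unfolding groupoid_def by blast+

lemma src_in_Gm [simp]: "g \<in> Gm \<Longrightarrow> src g \<in> Gm"
  and tgt_in_Gm [simp]: "g \<in> Gm \<Longrightarrow> tgt g \<in> Gm"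
  by (simp_all add: obj_in_Gm)

lemma cmp_assoc:
  "g \<in> Gm \<Longrightarrow> h \<in> Gm \<Longrightarrow> k \<in> Gm \<Longrightarrow> src g = tgt h \<Longrightarrow> src h = tgt k \<Longrightarrow>
    cmp (cmp g h) k = cmp g (cmp h k)"
  using groupoid unfolding groupoid_def by blast

lemma inv_cmp_cancel_left [simp]:
  assumes "k \<in> Gm" "g \<in> Gm" "tgt g = src k"
  shows "cmp (gi k) (cmp k g) = g"
proof -
  have "cmp (gi k) (cmp k g) = cmp (cmp (gi k) k) g"
    by (rule cmp_assoc[symmetric]) (use assms in simp_all)
  also have "\<dots> = cmp (tgt g) g"
    using assms by simp
  also have "\<dots> = g"
    using assms(2) by simp
  finally show ?thesis .
qed

lemma cmp_inv_cancel_left [simp]: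
  assumes "k \<in> Gm" "g \<in> Gm" "tgt g = tgt k"
  shows "cmp k (cmp (gi k) g) = g"
proof -
  have "cmp k (cmp (gi k) g) = cmp (cmp k (gi k)) g"
    by (rule cmp_assoc[symmetric]) (use assms in simp_all)
  also have "\<dots> = cmp (tgt g) g"
    using assms by simp
  also have "\<dots> = g"
    using assms(2) by simp
  finally show ?thesis .
qed

lemma inv_cmp_cancel_right [simp]:
  assumes "k \<in> Gm" "h \<in> Gm" "src h = src k"
  shows "cmp (cmp h (gi k)) k = h"
proof -
  have "cmp (cmp h (gi k)) k = cmp h (cmp (gi k) k)"
    by (rule cmp_assoc) (use assms in simp_all)
  also have "\<dots> = cmp h (src h)"
    using assms by simp
  also have "\<dots> = h"
    using assms(2) by simp
  finally show ?thesis .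
qed

lemma cmp_inv_cancel_right [simp]:
  assumes "k \<in> Gm" "h \<in> Gm" "src h = tgt k"
  shows "cmp (cmp h k) (gi k) = h"
proof -
  have "cmp (cmp h k) (gi k) = cmp h (cmp k (gi k))"
    by (rule cmp_assoc) (use assms in simp_all)
  also have "\<dots> = cmp h (src h)"
    using assms by simp
  also have "\<dots> = h"
    using assms(2) by simp
  finally show ?thesis .
qed

lemma cmp_left_cancel:
  assumes "k \<in> Gm" "g \<in> Gm" "h \<in> Gm" "tgt g = src k" "tgt h = src k" "cmp k g = cmp k h"
  shows "g = h"
proof -
  have "g = cmp (gi k) (cmp k g)"
    using assms(1,2,4) by simp
  also have "\<dots> = h"
    using assms by simp
  finally show ?thesis .
qed

lemma cmp_right_cancel:
  assumes "k \<in> Gm" "g \<in> Gm" "h \<in> Gm" "src g = tgt k" "src h = tgt k" "cmp g k = cmp h k"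
  shows "g = h"
proof -
  have "g = cmp (cmp g k) (gi k)"
    using assms(1,2,4) by simp
  also have "\<dots> = h"
    using assms by simp
  finally show ?thesis .
qed

lemma cmp_eq_iff_left:
  assumes "g \<in> Gm" "h \<in> Gm" "k \<in> Gm"
  shows "src g = tgt h \<and> cmp g h = k \<longleftrightarrow> tgt k = tgt g \<and> h = cmp (gi g) k"
proof
  assume gh: "src g = tgt h \<and> cmp g h = k"
  then have "tgt k = tgt g"
    using assms tgt_cmp[of g h] by metis
  moreover have "h = cmp (gi g) k"
    using gh assms inv_cmp_cancel_left[of g h] by metis
  ultimately show "tgt k = tgt g \<and> h = cmp (gi g) k" ..
next
  assume "tgt k = tgt g \<and> h = cmp (gi g) k"
  then show "src g = tgt h \<and> cmp g h = k"
    using assms by auto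
qed

lemma cmp_eq_iff_right:
  assumes "g \<in> Gm" "h \<in> Gm" "k \<in> Gm"
  shows "src g = tgt h \<and> cmp g h = k \<longleftrightarrow> src k = src h \<and> g = cmp k (gi h)"
proof
  assume gh: "src g = tgt h \<and> cmp g h = k"
  then have "src k = src h"
    using assms src_cmp[of g h] by metis
  moreover have "g = cmp k (gi h)"
    using gh assms cmp_inv_cancel_right[of h g] by metis
  ultimately show "src k = src h \<and> g = cmp k (gi h)" ..
next
  assume "src k = src h \<and> g = cmp k (gi h)"
  then show "src g = tgt h \<and> cmp g h = k"
    using assms by auto
qed

lemma inv_inv [simp]: "g \<in> Gm \<Longrightarrow> gi (gi g) = g"
  by (rule cmp_right_cancel[of "gi g"]) simp_all

lemma inv_obj [simp]:
  assumes "e \<in> G0"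
  shows "gi e = e"
proof (rule cmp_right_cancel[of e])
  show "cmp (gi e) e = cmp e e"
    using cmp_src[of e] assms by (simp add: obj_in_Gm)
qed (use assms in \<open>simp_all add: obj_in_Gm\<close>)

lemma inv_cmp_distrib:
  assumes "g \<in> Gm" "h \<in> Gm" "src g = tgt h"
  shows "gi (cmp g h) = cmp (gi h) (gi g)"
proof (rule cmp_right_cancel[of "cmp g h"])
  show "cmp (gi (cmp g h)) (cmp g h) = cmp (cmp (gi h) (gi g)) (cmp g h)"
    using assms by (simp add: cmp_assoc)
qed (use assms in simp_all)

lemma cmp_eq_obj_imp_inv:
  assumes "g \<in> Gm" "h \<in> Gm" "src g = tgt h" "cmp g h \<in> G0"
  shows "h = gi g"
proof -
  have "cmp g h = tgt g"
    by (metis tgt_obj[OF assms(4)] tgt_cmp[OF assms(1-3)])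
  then show ?thesis
    using cmp_left_cancel[of g h "gi g"] assms by simp
qed

end

locale global_action = groupoid_structure Gm G0 src tgt gi cmp
  for Gm G0 :: "'g set" and src tgt gi :: "'g \<Rightarrow> 'g" and cmp :: "'g \<Rightarrow> 'g \<Rightarrow> 'g" +
  fixes u :: "'g \<Rightarrow> 'a::ring_1"
    and \<alpha> :: "'g \<Rightarrow> 'a \<Rightarrow> 'a"
  assumes global: "unital_global_action Gm G0 src tgt cmp gi u \<alpha>"
begin

lemma partial_action: "unital_partial_action Gm G0 src tgt cmp gi u \<alpha>"
  using global unfolding unital_global_action_def by blast

lemma unit_commute: "g \<in> Gm \<Longrightarrow> u g * b = b * u g"
  and unit_idem [simp]: "g \<in> Gm \<Longrightarrow> u g * u g = u g"
  using partial_action unfolding unital_partial_action_def central_def by blast+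

lemma ideal_of_tgt: "g \<in> Gm \<Longrightarrow> ideal_of u g = ideal_of u (tgt g)"
  using global unfolding unital_global_action_def by blast

lemma mem_ideal_of_iff: "g \<in> Gm \<Longrightarrow> x \<in> ideal_of u g \<longleftrightarrow> x * u g = x"
  unfolding ideal_of_def by (auto simp: mult.assoc) (metis)

lemma unit_in_ideal: "g \<in> Gm \<Longrightarrow> u g \<in> ideal_of u g"
  by (simp add: mem_ideal_of_iff)

lemma unit_eq_tgt: assumes "g \<in> Gm" shows "u g = u (tgt g)"
proof -
  have "u g \<in> ideal_of u (tgt g)" "u (tgt g) \<in> ideal_of u g"
    using unit_in_ideal[of g] unit_in_ideal[of "tgt g"] ideal_of_tgt[OF assms] assms by simp_all
  then have "u g * u (tgt g) = u g" "u (tgt g) * u g = u (tgt g)"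
    using mem_ideal_of_iff assms by simp_all
  then show ?thesis
    using unit_commute[OF assms] by metis
qed

lemma unit_inv: "g \<in> Gm \<Longrightarrow> u (gi g) = u (src g)"
  using unit_eq_tgt[of "gi g"] by simp

lemma mem_ideal_iff: "g \<in> Gm \<Longrightarrow> x \<in> ideal_of u g \<longleftrightarrow> x * u (tgt g) = x"
  using mem_ideal_of_iff[of g x] unit_eq_tgt[of g] by simp

lemma mem_ideal_inv_iff: "g \<in> Gm \<Longrightarrow> x \<in> ideal_of u (gi g) \<longleftrightarrow> x * u (src g) = x"
  by (simp add: mem_ideal_iff)

lemma ideal_zero [simp]: "g \<in> Gm \<Longrightarrow> 0 \<in> ideal_of u g"
  by (simp add: mem_ideal_iff)

lemma ideal_add: "g \<in> Gm \<Longrightarrow> x \<in> ideal_of u g \<Longrightarrow> y \<in> ideal_of u g \<Longrightarrow> x + y \<in> ideal_of u g"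
  by (simp add: mem_ideal_iff distrib_right)

lemma ideal_neg: "g \<in> Gm \<Longrightarrow> x \<in> ideal_of u g \<Longrightarrow> - x \<in> ideal_of u g"
  by (simp add: mem_ideal_iff)

lemma ideal_mult_left: "g \<in> Gm \<Longrightarrow> y \<in> ideal_of u g \<Longrightarrow> x * y \<in> ideal_of u g"
  by (simp add: mem_ideal_iff mult.assoc)

lemma ideal_mult_right:
  assumes "g \<in> Gm" "x \<in> ideal_of u g"
  shows "x * y \<in> ideal_of u g"
proof -
  have "x * y * u (tgt g) = x * u (tgt g) * y"
    using unit_commute[of "tgt g" y] assms(1) by (simp add: mult.assoc)
  then show ?thesis
    using assms by (simp add: mem_ideal_iff)
qed

lemma ideal_sum: "g \<in> Gm \<Longrightarrow> (\<And>i. i \<in> I \<Longrightarrow> f i \<in> ideal_of u g) \<Longrightarrow> sum f I \<in> ideal_of u g"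
  by (induction I rule: infinite_finite_induct) (auto simp: ideal_add)

lemma act_iso: "g \<in> Gm \<Longrightarrow> ring_iso_betw (\<alpha> g) (ideal_of u (gi g)) (ideal_of u g)"
  using partial_action unfolding unital_partial_action_def by blast

lemma act_add: "g \<in> Gm \<Longrightarrow> x \<in> ideal_of u (gi g) \<Longrightarrow> y \<in> ideal_of u (gi g) \<Longrightarrow>
    \<alpha> g (x + y) = \<alpha> g x + \<alpha> g y"
  and act_mult: "g \<in> Gm \<Longrightarrow> x \<in> ideal_of u (gi g) \<Longrightarrow> y \<in> ideal_of u (gi g) \<Longrightarrow>
    \<alpha> g (x * y) = \<alpha> g x * \<alpha> g y"
  and act_in_ideal: "g \<in> Gm \<Longrightarrow> x \<in> ideal_of u (gi g) \<Longrightarrow> \<alpha> g x \<in> ideal_of u g"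
  using act_iso unfolding ring_iso_betw_def bij_betw_def by blast+

lemma act_obj: "e \<in> G0 \<Longrightarrow> x \<in> ideal_of u e \<Longrightarrow> \<alpha> e x = x"
  using partial_action unfolding unital_partial_action_def by blast

lemma act_cmp:
  assumes "g \<in> Gm" "h \<in> Gm" "src g = tgt h" "x \<in> ideal_of u (gi h)"
  shows "\<alpha> g (\<alpha> h x) = \<alpha> (cmp g h) x"
proof -
  have "\<alpha> h x \<in> ideal_of u h"
    using act_in_ideal assms by blast
  moreover have "ideal_of u (gi g) = ideal_of u h"
    using ideal_of_tgt[of h] ideal_of_tgt[of "gi g"] assms by simp
  ultimately have "\<alpha> h x \<in> ideal_of u (gi g) \<inter> ideal_of u h"
    by simp
  then show ?thesis
    using partial_action assms unfolding unital_partial_action_def by blast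
qed

lemma act_act_inv [simp]:
  assumes "g \<in> Gm" "x \<in> ideal_of u g"
  shows "\<alpha> g (\<alpha> (gi g) x) = x"
proof -
  have "\<alpha> g (\<alpha> (gi g) x) = \<alpha> (tgt g) x"
    using act_cmp[of g "gi g" x] assms by simp
  then show ?thesis
    using act_obj[of "tgt g" x] ideal_of_tgt[of g] assms by simp
qed

lemma act_inv_act [simp]: "g \<in> Gm \<Longrightarrow> x \<in> ideal_of u (gi g) \<Longrightarrow> \<alpha> (gi g) (\<alpha> g x) = x"
  using act_act_inv[of "gi g" x] by simp

lemma act_zero [simp]: "g \<in> Gm \<Longrightarrow> \<alpha> g 0 = 0"
  using act_add[of g 0 0] by simp

lemma act_neg: assumes "g \<in> Gm" "x \<in> ideal_of u (gi g)" shows "\<alpha> g (- x) = - \<alpha> g x"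
proof -
  have "\<alpha> g x + \<alpha> g (- x) = 0"
    using act_add[of g x "- x"] ideal_neg[of "gi g" x] assms by simp
  then show ?thesis
    by (rule minus_unique[symmetric])
qed

lemma act_sum:
  "g \<in> Gm \<Longrightarrow> (\<And>i. i \<in> I \<Longrightarrow> f i \<in> ideal_of u (gi g)) \<Longrightarrow> \<alpha> g (sum f I) = (\<Sum>i\<in>I. \<alpha> g (f i))"
  by (induction I rule: infinite_finite_induct) (simp_all add: act_add ideal_sum)

lemma act_of_int_mult:
  assumes "g \<in> Gm" "x \<in> ideal_of u (gi g)"
  shows "\<alpha> g (of_int n * x) = of_int n * \<alpha> g x"
proof -
  have nat: "\<alpha> g (of_nat m * x) = of_nat m * \<alpha> g x" for m
    by (induction m) (use assms in \<open>simp_all add: distrib_right act_add ideal_mult_left\<close>)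
  show ?thesis
  proof (cases "n \<ge> 0")
    case True
    then show ?thesis using nat[of "nat n"] by simp
  next
    case False
    then have "of_int n * x = - (of_nat (nat (- n)) * x)" by simp
    then show ?thesis
      using nat[of "nat (- n)"] act_neg assms ideal_mult_left False by simp
  qed
qed

lemma act_unit: assumes "g \<in> Gm" shows "\<alpha> g (u (gi g)) = u g"
proof -
  have "u g \<in> \<alpha> g ` ideal_of u (gi g)"
    using act_iso[OF assms] unit_in_ideal[OF assms] unfolding ring_iso_betw_def bij_betw_def by simp
  then obtain y where y: "y \<in> ideal_of u (gi g)" "\<alpha> g y = u g"
    by (metis imageE)
  have "u g = u g * \<alpha> g (u (gi g))"
    using act_mult[of g y "u (gi g)"] y assms unit_in_ideal[of "gi g"]
    by (simp add: mem_ideal_of_iff[of "gi g" y])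
  also have "\<dots> = \<alpha> g (u (gi g))"
    using act_in_ideal[OF assms unit_in_ideal[of "gi g"]] assms unit_commute[OF assms]
    by (simp add: mem_ideal_of_iff)
  finally show ?thesis by simp
qed

lemma act_fs_sum:
  assumes "g \<in> Gm" "\<And>p. x p \<noteq> 0 \<Longrightarrow> h p \<in> ideal_of u (gi g)"
  shows "\<alpha> g (fs_sum x h) = fs_sum x (\<lambda>p. \<alpha> g (h p))"
  unfolding fs_sum_def using assms
  by (subst act_sum) (auto simp: act_of_int_mult ideal_mult_left)

lemma trace_map_eq_sum:
  assumes "finite Gm" "finite G0" "e \<in> G0"
  shows "trace_map Gm G0 src tgt gi u \<alpha> e a = (\<Sum>g\<in>{g \<in> Gm. tgt g = e}. \<alpha> g (a * u (src g)))"
proof -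
  have "trace_map Gm G0 src tgt gi u \<alpha> e a
      = (\<Sum>ei\<in>G0. \<Sum>g\<in>{g \<in> {g \<in> Gm. tgt g = e}. src g = ei}. \<alpha> g (a * u (src g)))"
    unfolding trace_map_def hom_set_def by (intro sum.cong) (auto simp: unit_inv)
  also have "\<dots> = (\<Sum>g\<in>{g \<in> Gm. tgt g = e}. \<alpha> g (a * u (src g)))"
    using assms by (intro sum.group) auto
  finally show ?thesis .
qed

end

section \<open>The skew groupoid ring\<close>

definition supp :: "('g \<Rightarrow> 'a::zero) \<Rightarrow> 'g set" where
  "supp f = {g. f g \<noteq> 0}"

definition monom :: "'g \<Rightarrow> 'a::zero \<Rightarrow> 'g \<Rightarrow> 'a" where
  "monom k c = (\<lambda>j. if j = k then c else 0)"

context global_action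
begin

abbreviation "S \<equiv> skew_groupoid_ring Gm G0 src tgt cmp gi u \<alpha>"
abbreviation "car \<equiv> skew_carrier Gm u"
abbreviation "mul \<equiv> skew_mult Gm src tgt cmp gi \<alpha>"

lemma skew_ring_simps [simp]:
  "carrier S = car" "add S = (\<lambda>f f' g. f g + f' g)" "zero S = (\<lambda>g. 0)"
  "monoid.mult S = mul" "one S = (\<lambda>g. if g \<in> G0 then u g else 0)"
  unfolding skew_groupoid_ring_def by simp_all

lemma car_iff:
  "f \<in> car \<longleftrightarrow> finite (supp f) \<and> (\<forall>g. g \<notin> Gm \<longrightarrow> f g = 0) \<and> (\<forall>g\<in>Gm. f g \<in> ideal_of u g)"
  unfolding skew_carrier_def supp_def by auto

lemma car_finite_supp: "f \<in> car \<Longrightarrow> finite (supp f)"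
  and car_outside: "f \<in> car \<Longrightarrow> g \<notin> Gm \<Longrightarrow> f g = 0"
  and car_ideal: "f \<in> car \<Longrightarrow> g \<in> Gm \<Longrightarrow> f g \<in> ideal_of u g"
  by (simp_all add: car_iff)

lemma car_zero [simp]: "(\<lambda>g. 0) \<in> car"
  unfolding car_iff supp_def by simp

lemma car_add: "f \<in> car \<Longrightarrow> f' \<in> car \<Longrightarrow> (\<lambda>g. f g + f' g) \<in> car"
proof -
  assume f: "f \<in> car" and f': "f' \<in> car"
  have "supp (\<lambda>g. f g + f' g) \<subseteq> supp f \<union> supp f'"
    unfolding supp_def by auto
  then show ?thesis
    using f f' unfolding car_iff by (auto intro: finite_subset simp: ideal_add)
qed

lemma car_neg: "f \<in> car \<Longrightarrow> (\<lambda>g. - f g) \<in> car"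
  unfolding car_iff supp_def by (auto simp: ideal_neg)

lemma monom_in_car: "k \<in> Gm \<Longrightarrow> c \<in> ideal_of u k \<Longrightarrow> monom k c \<in> car"
  unfolding car_iff supp_def monom_def by (auto intro: finite_subset[of _ "{k}"])

lemma abelian_group_skew_ring: "abelian_group S"
  by (rule abelian_groupI) (auto simp: car_add algebra_simps intro!: bexI[OF _ car_neg])

lemma finsum_apply:
  assumes "finite I" "\<And>i. i \<in> I \<Longrightarrow> F i \<in> car"
  shows "finsum S F I g = (\<Sum>i\<in>I. F i g)"
proof -
  interpret abelian_group S by (rule abelian_group_skew_ring)
  show ?thesis
    using assms by (induction I rule: finite_induct) (simp_all add: finsum_insert Pi_def)
qed

lemma add_pow_apply:
  assumes "f \<in> car"
  shows "add_pow S (n::int) f g = of_int n * f g"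
proof -
  interpret abelian_group S by (rule abelian_group_skew_ring)
  have nat: "add_pow S (m::nat) f g = of_nat m * f g" for m
    by (induction m) (auto simp: distrib_right)
  show ?thesis
  proof (cases "n \<ge> 0")
    case True
    then show ?thesis using nat[of "nat n"] add_pow_int_ge[of n S f] by simp
  next
    case False
    have "add_pow S (nat (- n)) f \<in> car"
      using add.nat_pow_closed assms by simp
    then have "a_inv S (add_pow S (nat (- n)) f) = (\<lambda>g. - add_pow S (nat (- n)) f g)"
      by (intro minus_equality) (auto simp: car_neg)
    then show ?thesis using False nat[of "nat (- n)"] by (simp add: add_pow_int_lt)
  qed
qed

text \<open>Since \<open>g h = k\<close> forces \<open>h = g\<inverse>k\<close>, the product is a sum over \<open>g\<close> alone; \<open>P\<close> may be any
  finite set of morphisms into \<open>t(k)\<close> that covers the nonzero terms.\<close>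

lemma skew_mult_eq_sum:
  assumes k: "k \<in> Gm"
    and P: "finite P" "P \<subseteq> {g \<in> Gm. tgt g = tgt k}"
    and cover: "\<And>g. g \<in> Gm \<Longrightarrow> tgt g = tgt k \<Longrightarrow> f g \<noteq> 0 \<Longrightarrow> f' (cmp (gi g) k) \<noteq> 0 \<Longrightarrow> g \<in> P"
  shows "mul f f' k = (\<Sum>g\<in>P. \<alpha> g (\<alpha> (gi g) (f g) * f' (cmp (gi g) k)))"
proof -
  let ?Q = "{g \<in> P. f g \<noteq> 0 \<and> f' (cmp (gi g) k) \<noteq> 0}"
  have pairs: "{(g, h). g \<in> Gm \<and> h \<in> Gm \<and> f g \<noteq> 0 \<and> f' h \<noteq> 0 \<and> src g = tgt h \<and> cmp g h = k}
      = (\<lambda>g. (g, cmp (gi g) k)) ` ?Q" (is "?pairs = _")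
  proof (intro equalityI subsetI)
    fix p assume "p \<in> ?pairs"
    then obtain g h where p: "p = (g, h)" and gh: "g \<in> Gm" "h \<in> Gm" "f g \<noteq> 0" "f' h \<noteq> 0"
      "src g = tgt h" "cmp g h = k" by blast
    have "tgt g = tgt k" "h = cmp (gi g) k"
      using gh by (auto simp flip: gh(6))
    then show "p \<in> (\<lambda>g. (g, cmp (gi g) k)) ` ?Q"
      using gh cover p by auto
  next
    fix p assume "p \<in> (\<lambda>g. (g, cmp (gi g) k)) ` ?Q"
    then show "p \<in> ?pairs" using P k by auto
  qed
  have "mul f f' k = (\<Sum>g\<in>?Q. \<alpha> g (\<alpha> (gi g) (f g) * f' (cmp (gi g) k)))"
    unfolding skew_mult_def pairs by (subst sum.reindex) (auto intro: inj_onI)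
  also have "\<dots> = (\<Sum>g\<in>P. \<alpha> g (\<alpha> (gi g) (f g) * f' (cmp (gi g) k)))"
    using P by (intro sum.mono_neutral_left) auto
  finally show ?thesis .
qed

lemma skew_mult_outside:
  assumes "k \<notin> Gm"
  shows "mul f f' k = 0"
proof -
  have empty: "{(g, h). g \<in> Gm \<and> h \<in> Gm \<and> f g \<noteq> 0 \<and> f' h \<noteq> 0 \<and> src g = tgt h \<and> cmp g h = k} = {}"
    using assms by auto
  show ?thesis
    unfolding skew_mult_def by (simp only: empty sum.empty)
qed

lemma skew_mult_in_car:
  assumes f: "f \<in> car" and f': "f' \<in> car"
  shows "mul f f' \<in> car"
proof -
  let ?pairs = "\<lambda>k. {(g, h). g \<in> Gm \<and> h \<in> Gm \<and> f g \<noteq> 0 \<and> f' h \<noteq> 0 \<and> src g = tgt h \<and> cmp g h = k}"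
  have nonzero: "?pairs k \<noteq> {}" if "mul f f' k \<noteq> 0" for k
  proof
    assume empty: "?pairs k = {}"
    have "mul f f' k = 0"
      unfolding skew_mult_def by (simp only: empty sum.empty)
    then show False
      using that by simp
  qed
  have "supp (mul f f') \<subseteq> (\<lambda>(g, h). cmp g h) ` (supp f \<times> supp f')"
  proof
    fix k assume "k \<in> supp (mul f f')"
    then have "?pairs k \<noteq> {}"
      using nonzero unfolding supp_def by simp
    then obtain g h where "f g \<noteq> 0" "f' h \<noteq> 0" "cmp g h = k"
      by auto
    then show "k \<in> (\<lambda>(g, h). cmp g h) ` (supp f \<times> supp f')"
      unfolding supp_def by force
  qed
  then have "finite (supp (mul f f'))"
    using car_finite_supp[OF f] car_finite_supp[OF f'] by (auto intro: finite_surj)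
  moreover have "mul f f' k = 0" if "k \<notin> Gm" for k
    using that by (rule skew_mult_outside)
  moreover have "mul f f' k \<in> ideal_of u k" if k: "k \<in> Gm" for k
  proof -
    let ?P = "{g \<in> supp f. g \<in> Gm \<and> tgt g = tgt k}"
    have "finite ?P"
      using car_finite_supp[OF f] by simp
    then have "mul f f' k = (\<Sum>g\<in>?P. \<alpha> g (\<alpha> (gi g) (f g) * f' (cmp (gi g) k)))"
      using k by (intro skew_mult_eq_sum) (auto simp: supp_def)
    also have "\<dots> \<in> ideal_of u k"
    proof (rule ideal_sum[OF k])
      fix g assume g: "g \<in> ?P"
      then have "\<alpha> (gi g) (f g) \<in> ideal_of u (gi g)"
        using act_in_ideal[of "gi g" "f g"] car_ideal[OF f, of g] by simp
      then have "\<alpha> g (\<alpha> (gi g) (f g) * f' (cmp (gi g) k)) \<in> ideal_of u g"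
        using g by (simp add: act_in_ideal ideal_mult_right)
      then show "\<alpha> g (\<alpha> (gi g) (f g) * f' (cmp (gi g) k)) \<in> ideal_of u k"
        using g k by (simp add: mem_ideal_iff)
    qed
    finally show ?thesis .
  qed
  ultimately show ?thesis
    unfolding car_iff by simp
qed

abbreviation "emb \<equiv> skew_embed G0 u"

abbreviation delta :: "'g \<Rightarrow> 'g \<Rightarrow> 'a" where
  "delta g \<equiv> monom g (u g)"

lemma delta_in_car: "g \<in> Gm \<Longrightarrow> delta g \<in> car"
  by (simp add: monom_in_car unit_in_ideal)

lemma emb_in_car:
  assumes "finite G0"
  shows "emb c \<in> car"
proof -
  have "supp (emb c) \<subseteq> G0"
    unfolding supp_def skew_embed_def by auto
  then show ?thesis
    using assms unfolding car_iff skew_embed_def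
    by (auto intro: finite_subset simp: obj_in_Gm mem_ideal_iff mult.assoc)
qed

lemma skew_mult_monom_left:
  assumes j: "j \<in> Gm" and k: "k \<in> Gm"
  shows "mul (monom j c) f k = (if tgt k = tgt j then \<alpha> j (\<alpha> (gi j) c * f (cmp (gi j) k)) else 0)"
proof -
  have "mul (monom j c) f k
      = (\<Sum>g\<in>(if tgt k = tgt j then {j} else {}). \<alpha> g (\<alpha> (gi g) (monom j c g) * f (cmp (gi g) k)))"
    using j by (intro skew_mult_eq_sum[OF k]) (auto simp: monom_def split: if_splits)
  then show ?thesis
    by (simp add: monom_def split: if_splits)
qed

lemma skew_mult_monom_right:
  assumes j: "j \<in> Gm" and k: "k \<in> Gm"
  shows "mul f (monom j c) k =
    (if src k = src j then \<alpha> (cmp k (gi j)) (\<alpha> (gi (cmp k (gi j))) (f (cmp k (gi j))) * c) else 0)"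
proof -
  have solve: "cmp (gi g) k = j \<longleftrightarrow> src k = src j \<and> g = cmp k (gi j)"
    if "g \<in> Gm" "tgt g = tgt k" for g
    using cmp_eq_iff_left[of g j k] cmp_eq_iff_right[of g j k] that j k by auto
  have "mul f (monom j c) k
      = (\<Sum>g\<in>(if src k = src j then {cmp k (gi j)} else {}).
          \<alpha> g (\<alpha> (gi g) (f g) * monom j c (cmp (gi g) k)))"
    using j k solve by (intro skew_mult_eq_sum[OF k]) (auto simp: monom_def split: if_splits)
  also have "\<dots> = (if src k = src j then \<alpha> (cmp k (gi j)) (\<alpha> (gi (cmp k (gi j))) (f (cmp k (gi j))) * c) else 0)"
    using j k solve[of "cmp k (gi j)"] by (simp add: monom_def)
  finally show ?thesis .
qed

lemma skew_mult_delta_left: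
  assumes f: "f \<in> car" and j: "j \<in> Gm" and k: "k \<in> Gm"
  shows "mul (delta j) f k = (if tgt k = tgt j then \<alpha> j (f (cmp (gi j) k)) else 0)"
proof -
  have "\<alpha> (gi j) (u j) * f (cmp (gi j) k) = f (cmp (gi j) k)" if "tgt k = tgt j"
  proof -
    have "\<alpha> (gi j) (u j) = u (src j)"
      using act_unit[of "gi j"] j by (simp add: unit_inv)
    moreover have "f (cmp (gi j) k) * u (src j) = f (cmp (gi j) k)"
      using car_ideal[OF f, of "cmp (gi j) k"] j k that by (simp add: mem_ideal_iff)
    ultimately show ?thesis
      using unit_commute[of "src j"] j by simp
  qed
  then show ?thesis
    using skew_mult_monom_left[OF j k] by simp
qed

lemma skew_mult_delta_right:
  assumes f: "f \<in> car" and j: "j \<in> Gm" and k: "k \<in> Gm"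
  shows "mul f (delta j) k = (if src k = src j then f (cmp k (gi j)) else 0)"
proof -
  have "\<alpha> (cmp k (gi j)) (\<alpha> (gi (cmp k (gi j))) (f (cmp k (gi j))) * u j) = f (cmp k (gi j))"
    if "src k = src j"
  proof -
    let ?g = "cmp k (gi j)"
    have g: "?g \<in> Gm" "src ?g = tgt j"
      using j k that by simp_all
    have "\<alpha> (gi ?g) (f ?g) \<in> ideal_of u (gi ?g)"
      using act_in_ideal[of "gi ?g"] car_ideal[OF f g(1)] g by simp
    then have "\<alpha> (gi ?g) (f ?g) * u j = \<alpha> (gi ?g) (f ?g)"
      using g j by (simp add: mem_ideal_inv_iff unit_eq_tgt[of j])
    then show ?thesis
      using car_ideal[OF f g(1)] g by simp
  qed
  then show ?thesis
    using skew_mult_monom_right[OF j k] by simp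
qed

lemma skew_mult_embed_left:
  assumes f: "f \<in> car" and k: "k \<in> Gm"
  shows "mul (emb c) f k = c * f k"
proof -
  let ?e = "tgt k"
  have "mul (emb c) f k = (\<Sum>g\<in>{?e}. \<alpha> g (\<alpha> (gi g) (emb c g) * f (cmp (gi g) k)))"
    using k by (intro skew_mult_eq_sum) (auto simp: skew_embed_def split: if_splits)
  also have "\<dots> = \<alpha> ?e (c * u ?e * f k)"
    using k act_obj[of ?e "c * u ?e"] by (simp add: skew_embed_def mem_ideal_iff mult.assoc)
  also have "c * u ?e * f k = c * f k"
    using car_ideal[OF f k] k unit_commute[of ?e "f k"] by (simp add: mem_ideal_iff mult.assoc)
  also have "\<alpha> ?e (c * f k) = c * f k"
    using car_ideal[OF f k] k by (intro act_obj) (simp_all add: ideal_mult_left ideal_of_tgt[symmetric])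
  finally show ?thesis .
qed

lemma skew_mult_embed_right:
  assumes f: "f \<in> car" and k: "k \<in> Gm"
  shows "mul f (emb c) k = \<alpha> k (\<alpha> (gi k) (f k) * c)"
proof -
  have "mul f (emb c) k = (\<Sum>g\<in>{k}. \<alpha> g (\<alpha> (gi g) (f g) * emb c (cmp (gi g) k)))"
  proof (intro skew_mult_eq_sum[OF k])
    fix g assume "g \<in> Gm" "tgt g = tgt k" "emb c (cmp (gi g) k) \<noteq> 0"
    then show "g \<in> {k}"
      using cmp_eq_obj_imp_inv[of "gi g" k] k by (simp add: skew_embed_def split: if_splits)
  qed (use k in auto)
  also have "\<dots> = \<alpha> k (\<alpha> (gi k) (f k) * (c * u (src k)))"
    using k by (simp add: skew_embed_def)
  also have "\<alpha> (gi k) (f k) * (c * u (src k)) = \<alpha> (gi k) (f k) * c"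
  proof -
    have "\<alpha> (gi k) (f k) * u (src k) = \<alpha> (gi k) (f k)"
      using act_in_ideal[of "gi k" "f k"] car_ideal[OF f k] k by (simp add: mem_ideal_inv_iff)
    then show ?thesis
      using unit_commute[of "src k" c] k by (metis mult.assoc src_in_Gm)
  qed
  finally show ?thesis .
qed


lemma skew_mult_zero_left [simp]: "mul (\<lambda>j. 0) f = (\<lambda>j. 0)"
  and skew_mult_zero_right [simp]: "mul f (\<lambda>j. 0) = (\<lambda>j. 0)"
  unfolding skew_mult_def by simp_all

lemma skew_mult_add_left:
  assumes f1: "f1 \<in> car" and f2: "f2 \<in> car"
  shows "mul (\<lambda>j. f1 j + f2 j) f = (\<lambda>j. mul f1 f j + mul f2 f j)"
proof
  fix k
  show "mul (\<lambda>j. f1 j + f2 j) f k = mul f1 f k + mul f2 f k"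
  proof (cases "k \<in> Gm")
    case k: True
    let ?P = "{g \<in> supp f1 \<union> supp f2. g \<in> Gm \<and> tgt g = tgt k}"
    let ?t = "\<lambda>h g. \<alpha> g (\<alpha> (gi g) (h g) * f (cmp (gi g) k))"
    have P: "finite ?P"
      using car_finite_supp[OF f1] car_finite_supp[OF f2] by simp
    have "mul h f k = (\<Sum>g\<in>?P. ?t h g)" if "h \<in> {f1, f2, \<lambda>j. f1 j + f2 j}" for h
      using that k P by (intro skew_mult_eq_sum) (auto simp: supp_def)
    moreover have "?t (\<lambda>j. f1 j + f2 j) g = ?t f1 g + ?t f2 g" if "g \<in> ?P" for g
    proof -
      have "f1 g \<in> ideal_of u (gi (gi g))" "f2 g \<in> ideal_of u (gi (gi g))"
        using car_ideal[OF f1] car_ideal[OF f2] that by simp_all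
      then show ?thesis
        using that by (simp add: act_add distrib_right act_in_ideal ideal_mult_right)
    qed
    ultimately show ?thesis
      by (simp add: sum.distrib)
  qed (simp add: skew_mult_outside)
qed

lemma skew_mult_add_right:
  assumes f: "f \<in> car"
  shows "mul f (\<lambda>j. f1 j + f2 j) = (\<lambda>j. mul f f1 j + mul f f2 j)"
proof
  fix k
  show "mul f (\<lambda>j. f1 j + f2 j) k = mul f f1 k + mul f f2 k"
  proof (cases "k \<in> Gm")
    case k: True
    let ?P = "{g \<in> supp f. g \<in> Gm \<and> tgt g = tgt k}"
    let ?t = "\<lambda>h g. \<alpha> g (\<alpha> (gi g) (f g) * h (cmp (gi g) k))"
    have P: "finite ?P"
      using car_finite_supp[OF f] by simp
    have "mul f h k = (\<Sum>g\<in>?P. ?t h g)" for h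
      using k P by (intro skew_mult_eq_sum) (auto simp: supp_def)
    moreover have "?t (\<lambda>j. f1 j + f2 j) g = ?t f1 g + ?t f2 g" if "g \<in> ?P" for g
    proof -
      have "\<alpha> (gi g) (f g) \<in> ideal_of u (gi g)"
        using act_in_ideal[of "gi g"] car_ideal[OF f] that by simp
      then show ?thesis
        using that by (simp add: act_add distrib_left ideal_mult_right)
    qed
    ultimately show ?thesis
      by (simp add: sum.distrib)
  qed (simp add: skew_mult_outside)
qed

lemma skew_mult_monom_monom:
  assumes j: "j \<in> Gm" and k: "k \<in> Gm"
  shows "mul (monom j d) (monom k c) =
    (if src j = tgt k then monom (cmp j k) (\<alpha> j (\<alpha> (gi j) d * c)) else (\<lambda>i. 0))"
proof
  fix i
  show "mul (monom j d) (monom k c) i =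
      (if src j = tgt k then monom (cmp j k) (\<alpha> j (\<alpha> (gi j) d * c)) else (\<lambda>i. 0)) i"
  proof (cases "i \<in> Gm")
    case i: True
    have solve: "tgt i = tgt j \<and> cmp (gi j) i = k \<longleftrightarrow> src j = tgt k \<and> cmp j k = i"
      using cmp_eq_iff_left[of j k i] i j k by auto
    show ?thesis
      using skew_mult_monom_left[OF j i, of d "monom k c"] solve j
      by (auto simp: monom_def)
  next
    case False
    then show ?thesis
      using j k by (auto simp: skew_mult_outside monom_def)
  qed
qed

lemma skew_mult_monom_delta:
  assumes k: "k \<in> Gm" and g: "g \<in> Gm" and c: "c \<in> ideal_of u k"
  shows "mul (monom k c) (delta g) = (if src k = tgt g then monom (cmp k g) c else (\<lambda>j. 0))"
proof -
  have "\<alpha> k (\<alpha> (gi k) c * u g) = c" if "src k = tgt g"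
  proof -
    have "\<alpha> (gi k) c \<in> ideal_of u (gi k)"
      using act_in_ideal[of "gi k" c] c k by simp
    then have "\<alpha> (gi k) c * u g = \<alpha> (gi k) c"
      using that k g by (simp add: mem_ideal_inv_iff unit_eq_tgt[of g])
    then show ?thesis
      using c k by simp
  qed
  then show ?thesis
    using skew_mult_monom_monom[OF k g] by simp
qed

lemma skew_mult_delta_embed:
  assumes h: "h \<in> Gm" and c: "c \<in> ideal_of u (gi h)"
  shows "mul (delta h) (emb c) = monom h (\<alpha> h c)"
proof
  fix j
  show "mul (delta h) (emb c) j = monom h (\<alpha> h c) j"
  proof (cases "j \<in> Gm")
    case j: True
    have "\<alpha> (gi h) (u h) * c = c"
      using act_unit[of "gi h"] c h by (simp add: unit_inv mem_ideal_inv_iff unit_commute[of "src h"])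
    then show ?thesis
      using skew_mult_embed_right[OF monom_in_car[OF h unit_in_ideal[OF h]] j] h j
      by (simp add: monom_def)
  next
    case False
    then show ?thesis
      using h by (auto simp: skew_mult_outside monom_def)
  qed
qed

lemma skew_mult_embed_monom:
  assumes j: "j \<in> Gm" and d: "d \<in> ideal_of u j"
  shows "mul (emb c) (monom j d) = monom j (c * d)"
proof
  fix i
  show "mul (emb c) (monom j d) i = monom j (c * d) i"
    using skew_mult_embed_left[OF monom_in_car[OF j d], of i] skew_mult_outside[of i] j
    by (cases "i \<in> Gm") (auto simp: monom_def)
qed
definition tensor_coeff :: "'g \<Rightarrow> 'g \<Rightarrow> ('g \<Rightarrow> 'a) \<times> ('g \<Rightarrow> 'a) \<Rightarrow> 'a" where
  "tensor_coeff g h p = \<alpha> (gi g) (fst p g) * snd p h"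

lemma tensor_coeff_in_ideal: "g \<in> Gm \<Longrightarrow> fst p \<in> car \<Longrightarrow> tensor_coeff g h p \<in> ideal_of u (gi g)"
  unfolding tensor_coeff_def using act_in_ideal[of "gi g" "fst p g"] car_ideal[of "fst p" g]
  by (simp add: ideal_mult_right)

lemma balanced_tensor_coeff:
  assumes g: "g \<in> Gm"
  shows "balanced_map S (emb ` UNIV) (tensor_coeff g h)"
  unfolding balanced_map_def
proof (intro conjI ballI)
  fix a a' b assume "a \<in> carrier S" "a' \<in> carrier S" "b \<in> carrier S"
  then show "tensor_coeff g h (a \<oplus>\<^bsub>S\<^esub> a', b) = tensor_coeff g h (a, b) + tensor_coeff g h (a', b)"
    using act_add[of "gi g" "a g" "a' g"] car_ideal g by (simp add: tensor_coeff_def distrib_right)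
next
  fix a b b' assume "a \<in> carrier S" "b \<in> carrier S" "b' \<in> carrier S"
  then show "tensor_coeff g h (a, b \<oplus>\<^bsub>S\<^esub> b') = tensor_coeff g h (a, b) + tensor_coeff g h (a, b')"
    by (simp add: tensor_coeff_def distrib_left)
next
  fix a b r assume a: "a \<in> carrier S" and b: "b \<in> carrier S" and "r \<in> emb ` UNIV"
  then obtain c where r: "r = emb c" by blast
  have "\<alpha> (gi g) (a g) * c \<in> ideal_of u (gi g)"
    using act_in_ideal[of "gi g" "a g"] car_ideal[of a g] a g by (simp add: ideal_mult_right)
  then have "tensor_coeff g h (mul a r, b) = \<alpha> (gi g) (a g) * c * b h"
    using a g by (simp add: tensor_coeff_def r skew_mult_embed_right)
  also have "\<dots> = tensor_coeff g h (a, mul r b)"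
    using b car_outside[of b h] skew_mult_outside[of h]
    by (cases "h \<in> Gm") (simp_all add: tensor_coeff_def r skew_mult_embed_left mult.assoc)
  finally show "tensor_coeff g h (a \<otimes>\<^bsub>S\<^esub> r, b) = tensor_coeff g h (a, r \<otimes>\<^bsub>S\<^esub> b)"
    by simp
qed

lemma tensor_mult_apply:
  assumes "x \<in> formal_sums S"
  shows "tensor_mult S x k = fs_sum x (\<lambda>p. mul (fst p) (snd p) k)"
proof -
  interpret abelian_group S by (rule abelian_group_skew_ring)
  have x: "finite_supp x" "\<And>p. x p \<noteq> 0 \<Longrightarrow> fst p \<in> car \<and> snd p \<in> car"
    using assms unfolding formal_sums_def by auto
  then have "tensor_mult S x k = (\<Sum>p\<in>{p. x p \<noteq> 0}. add_pow S (x p) (mul (fst p) (snd p)) k)"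
    unfolding tensor_mult_def
    by (subst finsum_apply) (auto simp: skew_mult_in_car add.int_pow_closed[simplified])
  also have "\<dots> = fs_sum x (\<lambda>p. mul (fst p) (snd p) k)"
    unfolding fs_sum_def using x by (intro sum.cong) (simp_all add: add_pow_apply skew_mult_in_car)
  finally show ?thesis .
qed

end

section \<open>A separability element yields a central element of trace one\<close>

locale connected_skew_extension = global_action Gm G0 src tgt gi cmp u \<alpha>
  for Gm G0 :: "'g set" and src tgt gi cmp and u :: "'g \<Rightarrow> 'a::ring_1" and \<alpha> +
  assumes finite_G0: "finite G0"
    and connected: "groupoid_connected Gm G0 src tgt"
    and units_sum: "(\<Sum>e\<in>G0. u e) = 1"
    and units_orthogonal: "\<forall>e\<in>G0. \<forall>f\<in>G0. e \<noteq> f \<longrightarrow> u e * u f = 0"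
    and units_nonzero: "\<forall>e\<in>G0. u e \<noteq> 0"
begin

context
  fixes x :: "('g \<Rightarrow> 'a) \<times> ('g \<Rightarrow> 'a) \<Rightarrow> int"
  assumes x_formal_sum: "x \<in> formal_sums S"
    and x_mult: "tensor_mult S x = \<one>\<^bsub>S\<^esub>"
    and x_commute: "\<forall>s\<in>carrier S.
      (\<lambda>p. fs_map (\<lambda>(a, b). (s \<otimes>\<^bsub>S\<^esub> a, b)) x p - fs_map (\<lambda>(a, b). (a, b \<otimes>\<^bsub>S\<^esub> s)) x p)
        \<in> tensor_rel S (emb ` UNIV)"
begin

lemma x_finite_supp: "finite_supp x"
  using x_formal_sum unfolding formal_sums_def by simp

lemma x_in_car: "x p \<noteq> 0 \<Longrightarrow> fst p \<in> car" "x p \<noteq> 0 \<Longrightarrow> snd p \<in> car"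
  using x_formal_sum unfolding formal_sums_def by auto

definition coeff :: "'g \<Rightarrow> 'g \<Rightarrow> 'a" where
  "coeff g h = fs_sum x (tensor_coeff g h)"

lemma coeff_commute:
  assumes "s \<in> car" "g \<in> Gm"
  shows "fs_sum x (\<lambda>p. tensor_coeff g h (mul s (fst p), snd p))
       = fs_sum x (\<lambda>p. tensor_coeff g h (fst p, mul (snd p) s))"
  using fs_sum_commutator[OF x_finite_supp balanced_tensor_coeff] x_commute assms by simp

lemma coeff_translate:
  assumes k: "k \<in> Gm" and g: "g \<in> Gm" and h: "h \<in> Gm" and "tgt g = tgt k" "src h = src k"
  shows "coeff (cmp (gi k) g) h = coeff g (cmp h (gi k))"
proof -
  have "coeff (cmp (gi k) g) h = fs_sum x (\<lambda>p. tensor_coeff g h (mul (delta k) (fst p), snd p))"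
    unfolding coeff_def
  proof (rule fs_sum_cong)
    fix p assume "x p \<noteq> 0"
    then have a: "fst p \<in> car" by (rule x_in_car)
    have "fst p (cmp (gi k) g) \<in> ideal_of u (gi k)"
      using car_ideal[OF a, of "cmp (gi k) g"] assms by (simp add: mem_ideal_iff)
    then have "\<alpha> (gi g) (\<alpha> k (fst p (cmp (gi k) g))) = \<alpha> (gi (cmp (gi k) g)) (fst p (cmp (gi k) g))"
      using assms by (simp add: act_cmp inv_cmp_distrib)
    then show "tensor_coeff (cmp (gi k) g) h p = tensor_coeff g h (mul (delta k) (fst p), snd p)"
      using assms by (simp add: tensor_coeff_def skew_mult_delta_left[OF a])
  qed
  also have "\<dots> = fs_sum x (\<lambda>p. tensor_coeff g h (fst p, mul (snd p) (delta k)))"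
    using k g by (intro coeff_commute monom_in_car unit_in_ideal)
  also have "\<dots> = coeff g (cmp h (gi k))"
    unfolding coeff_def
    using assms x_in_car(2) by (intro fs_sum_cong) (simp add: tensor_coeff_def skew_mult_delta_right)
  finally show ?thesis .
qed

lemma coeff_inv_eq_coeff_src:
  assumes "k \<in> Gm"
  shows "coeff k (gi k) = coeff (src k) (src k)"
proof -
  have "coeff (cmp (gi k) k) (src k) = coeff k (cmp (src k) (gi k))"
    by (rule coeff_translate) (use assms in simp_all)
  moreover have "cmp (src k) (gi k) = gi k"
    using assms cmp_tgt[of "gi k"] by simp
  ultimately show ?thesis
    using assms by simp
qed

lemma coeff_translate_inv:
  assumes g: "g \<in> Gm" and k: "k \<in> Gm" and "tgt k = tgt g"
  shows "coeff (cmp (gi k) g) (cmp (gi g) k) = coeff g (gi g)"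
proof -
  have "coeff (cmp (gi k) g) (cmp (gi g) k) = coeff g (cmp (cmp (gi g) k) (gi k))"
    by (rule coeff_translate) (use assms in simp_all)
  also have "cmp (cmp (gi g) k) (gi k) = gi g"
    using assms by simp
  finally show ?thesis .
qed

lemma coeff_in_ideal:
  assumes g: "g \<in> Gm"
  shows "coeff g h \<in> ideal_of u (gi g)"
proof -
  have "coeff g h * u (src g) = fs_sum x (\<lambda>p. tensor_coeff g h p * u (src g))"
    unfolding coeff_def by (rule fs_sum_mult_right[symmetric])
  also have "\<dots> = coeff g h"
    unfolding coeff_def
    by (rule fs_sum_cong) (use tensor_coeff_in_ideal x_in_car g in \<open>simp add: mem_ideal_inv_iff\<close>)
  finally show ?thesis
    using g by (simp add: mem_ideal_inv_iff)
qed

lemma finite_coeff_support: "finite {(g, h). g \<in> Gm \<and> coeff g h \<noteq> 0}"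
proof (rule finite_subset)
  show "finite (\<Union>p\<in>{p. x p \<noteq> 0}. supp (fst p) \<times> supp (snd p))"
    using x_finite_supp x_in_car car_finite_supp by auto
  show "{(g, h). g \<in> Gm \<and> coeff g h \<noteq> 0} \<subseteq> (\<Union>p\<in>{p. x p \<noteq> 0}. supp (fst p) \<times> supp (snd p))"
  proof clarify
    fix g h assume g: "g \<in> Gm" and nonzero: "coeff g h \<noteq> 0"
    have "fs_sum x (tensor_coeff g h) \<noteq> 0"
      using nonzero unfolding coeff_def .
    then obtain p where "x p \<noteq> 0" "tensor_coeff g h p \<noteq> 0"
      by (rule fs_sum_nonzeroE)
    moreover from this have "fst p g \<noteq> 0" "snd p h \<noteq> 0"
      using g by (auto simp: tensor_coeff_def)
    ultimately show "(g, h) \<in> (\<Union>p\<in>{p. x p \<noteq> 0}. supp (fst p) \<times> supp (snd p))"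
      unfolding supp_def by blast
  qed
qed

text \<open>Until \<open>G\<close> is known to be finite, \<open>m(x) = 1\<close> can only be read as a sum over the morphisms
  carrying a left tensor factor of \<open>x\<close>.\<close>

definition left_supp :: "'g set" where
  "left_supp = (\<Union>p\<in>{p. x p \<noteq> 0}. supp (fst p))"

lemma finite_left_supp: "finite left_supp"
  unfolding left_supp_def using x_finite_supp x_in_car car_finite_supp by auto

lemma unit_eq_sum_coeff_left_supp:
  assumes e: "e \<in> G0"
  shows "u e = (\<Sum>g\<in>{g \<in> left_supp \<inter> Gm. tgt g = e}. \<alpha> g (coeff g (gi g)))"
proof -
  let ?P = "{g \<in> left_supp \<inter> Gm. tgt g = e}"
  have P: "finite ?P"
    using finite_left_supp by simp
  have "u e = fs_sum x (\<lambda>p. mul (fst p) (snd p) e)"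
    using x_mult tensor_mult_apply[OF x_formal_sum, of e] e by simp
  also have "\<dots> = fs_sum x (\<lambda>p. \<Sum>g\<in>?P. \<alpha> g (tensor_coeff g (gi g) p))"
  proof (rule fs_sum_cong)
    fix p assume "x p \<noteq> 0"
    then have "mul (fst p) (snd p) e = (\<Sum>g\<in>?P. \<alpha> g (\<alpha> (gi g) (fst p g) * snd p (cmp (gi g) e)))"
    proof (intro skew_mult_eq_sum P)
      fix g assume "g \<in> Gm" "tgt g = tgt e" "fst p g \<noteq> 0"
      then show "g \<in> ?P"
        using \<open>x p \<noteq> 0\<close> e unfolding left_supp_def supp_def by (cases p) auto
    qed (use e obj_in_Gm in auto)
    also have "\<dots> = (\<Sum>g\<in>?P. \<alpha> g (tensor_coeff g (gi g) p))"
    proof (rule sum.cong[OF refl])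
      fix g assume "g \<in> ?P"
      then have "cmp (gi g) e = gi g"
        using cmp_src[of "gi g"] by auto
      then show "\<alpha> g (\<alpha> (gi g) (fst p g) * snd p (cmp (gi g) e)) = \<alpha> g (tensor_coeff g (gi g) p)"
        by (simp add: tensor_coeff_def)
    qed
    finally show "mul (fst p) (snd p) e = (\<Sum>g\<in>?P. \<alpha> g (tensor_coeff g (gi g) p))" .
  qed
  also have "\<dots> = (\<Sum>g\<in>?P. fs_sum x (\<lambda>p. \<alpha> g (tensor_coeff g (gi g) p)))"
    by (rule fs_sum_sum_right)
  also have "\<dots> = (\<Sum>g\<in>?P. \<alpha> g (coeff g (gi g)))"
  proof (rule sum.cong[OF refl])
    fix g assume "g \<in> ?P"
    then show "fs_sum x (\<lambda>p. \<alpha> g (tensor_coeff g (gi g) p)) = \<alpha> g (coeff g (gi g))"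
      unfolding coeff_def
      by (intro act_fs_sum[symmetric]) (auto simp: tensor_coeff_in_ideal x_in_car)
  qed
  finally show ?thesis .
qed


lemma exists_coeff_nonzero: "\<exists>g\<in>Gm. coeff g (gi g) \<noteq> 0"
proof (rule ccontr)
  assume "\<not> ?thesis"
  then have zero: "\<And>g. g \<in> Gm \<Longrightarrow> \<alpha> g (coeff g (gi g)) = 0"
    by simp
  obtain e where e: "e \<in> G0"
    using units_sum by fastforce
  have "u e = 0"
    using unit_eq_sum_coeff_left_supp[OF e] zero by simp
  then show False
    using units_nonzero e by simp
qed

text \<open>Translating a nonzero \<open>coeff g\<^sub>0 g\<^sub>0\<inverse>\<close> by every \<open>k\<close> with \<open>t(k) = t(g\<^sub>0)\<close> gives
  nonzero coefficients at pairwise distinct places, of which there are finitely many.\<close>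

lemma finite_Gm: "finite Gm"
proof -
  obtain g0 where g0: "g0 \<in> Gm" "coeff g0 (gi g0) \<noteq> 0"
    using exists_coeff_nonzero by blast
  let ?H = "{k \<in> Gm. tgt k = tgt g0}"
  let ?f = "\<lambda>k. (cmp (gi k) g0, cmp (gi g0) k)"
  have "?f ` ?H \<subseteq> {(g, h). g \<in> Gm \<and> coeff g h \<noteq> 0}"
  proof (rule image_subsetI)
    fix k assume "k \<in> ?H"
    then show "?f k \<in> {(g, h). g \<in> Gm \<and> coeff g h \<noteq> 0}"
      using coeff_translate_inv[OF g0(1), of k] g0 by simp
  qed
  then have "finite (?f ` ?H)"
    using finite_coeff_support finite_subset by blast
  moreover have "inj_on ?f ?H"
  proof (rule inj_onI)
    fix k k' assume k: "k \<in> ?H" and k': "k' \<in> ?H" and "?f k = ?f k'"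
    then have eq: "cmp (gi k) g0 = cmp (gi k') g0"
      by simp
    have s: "src (gi k) = tgt g0" "src (gi k') = tgt g0"
      using k k' by simp_all
    have "gi k = gi k'"
      by (rule cmp_right_cancel[OF g0(1) _ _ s eq]) (use k k' in simp_all)
    then have "gi (gi k) = gi (gi k')"
      by simp
    then show "k = k'"
      using k k' by simp
  qed
  ultimately have "finite ?H"
    using finite_imageD by blast
  moreover have "Gm \<subseteq> (\<lambda>(m, k). cmp (gi m) k) ` (?H \<times> ?H)"
  proof
    fix g assume g: "g \<in> Gm"
    obtain m where m: "m \<in> Gm" "src m = tgt g" "tgt m = tgt g0"
      using connected g g0 unfolding groupoid_connected_def hom_set_def by fastforce
    then have "g = cmp (gi m) (cmp m g)" "cmp m g \<in> ?H"
      using g by simp_all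
    then show "g \<in> (\<lambda>(m, k). cmp (gi m) k) ` (?H \<times> ?H)"
      using m by force
  qed
  ultimately show ?thesis
    using finite_subset by blast
qed

lemma unit_eq_sum_coeff:
  assumes e: "e \<in> G0"
  shows "u e = (\<Sum>g\<in>{g \<in> Gm. tgt g = e}. \<alpha> g (coeff g (gi g)))"
proof -
  have "u e = (\<Sum>g\<in>{g \<in> left_supp \<inter> Gm. tgt g = e}. \<alpha> g (coeff g (gi g)))"
    by (rule unit_eq_sum_coeff_left_supp[OF e])
  also have "\<dots> = (\<Sum>g\<in>{g \<in> Gm. tgt g = e}. \<alpha> g (coeff g (gi g)))"
  proof (rule sum.mono_neutral_left)
    show "finite {g \<in> Gm. tgt g = e}"
      using finite_Gm by simp
    show "\<forall>g\<in>{g \<in> Gm. tgt g = e} - {g \<in> left_supp \<inter> Gm. tgt g = e}. \<alpha> g (coeff g (gi g)) = 0"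
    proof
      fix g assume g: "g \<in> {g \<in> Gm. tgt g = e} - {g \<in> left_supp \<inter> Gm. tgt g = e}"
      then have "\<And>p. x p \<noteq> 0 \<Longrightarrow> fst p g = 0"
        unfolding left_supp_def supp_def by auto
      then have "coeff g (gi g) = 0"
        unfolding coeff_def fs_sum_def using g by (simp add: tensor_coeff_def)
      then show "\<alpha> g (coeff g (gi g)) = 0"
        using g by simp
    qed
  qed auto
  finally show ?thesis .
qed

lemma coeff_obj_commute:
  assumes e: "e \<in> G0"
  shows "b * coeff e e = coeff e e * b"
proof -
  have e': "e \<in> Gm"
    using e by (rule obj_in_Gm)
  have "b * coeff e e = fs_sum x (\<lambda>p. tensor_coeff e e (mul (emb b) (fst p), snd p))"
    unfolding coeff_def fs_sum_mult_left[symmetric]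
  proof (rule fs_sum_cong)
    fix p assume "x p \<noteq> 0"
    then have "fst p e \<in> ideal_of u e"
      using x_in_car car_ideal e' by blast
    then show "b * tensor_coeff e e p = tensor_coeff e e (mul (emb b) (fst p), snd p)"
      using e e' x_in_car \<open>x p \<noteq> 0\<close>
      by (simp add: tensor_coeff_def skew_mult_embed_left act_obj ideal_mult_left mult.assoc)
  qed
  also have "\<dots> = fs_sum x (\<lambda>p. tensor_coeff e e (fst p, mul (snd p) (emb b)))"
    using e' finite_G0 by (intro coeff_commute emb_in_car)
  also have "\<dots> = coeff e e * b"
    unfolding coeff_def fs_sum_mult_right[symmetric]
  proof (rule fs_sum_cong)
    fix p assume "x p \<noteq> 0"
    then have "fst p e \<in> ideal_of u e" "snd p e \<in> ideal_of u e"
      using x_in_car car_ideal e' by blast+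
    then show "tensor_coeff e e (fst p, mul (snd p) (emb b)) = tensor_coeff e e p * b"
      using e e' x_in_car \<open>x p \<noteq> 0\<close>
      by (simp add: tensor_coeff_def skew_mult_embed_right act_obj ideal_mult_right mult.assoc)
  qed
  finally show ?thesis .
qed

lemma sum_coeff_obj_mult_unit:
  assumes e: "e \<in> G0"
  shows "(\<Sum>e'\<in>G0. coeff e' e') * u e = coeff e e"
proof -
  have "coeff e' e' * u e = (if e' = e then coeff e e else 0)" if e': "e' \<in> G0" for e'
  proof -
    have "coeff e' e' = coeff e' e' * u e'"
      using coeff_in_ideal[of e'] e' by (simp add: obj_in_Gm mem_ideal_iff)
    then show ?thesis
      using units_orthogonal e e' by (metis mult.assoc mult_zero_right)
  qed
  then show ?thesis
    using e by (simp add: sum_distrib_right finite_G0 cong: sum.cong)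
qed

lemma separable_elem_imp_trace_one:
  "finite Gm \<and> (\<exists>a. central a \<and> (\<forall>e\<in>G0. trace_map Gm G0 src tgt gi u \<alpha> e a = u e))"
proof (intro conjI exI ballI)
  let ?a = "\<Sum>e\<in>G0. coeff e e"
  show "finite Gm"
    by (rule finite_Gm)
  show "central ?a"
    unfolding central_def by (simp add: sum_distrib_left sum_distrib_right coeff_obj_commute)
  fix e assume e: "e \<in> G0"
  have "trace_map Gm G0 src tgt gi u \<alpha> e ?a = (\<Sum>g\<in>{g \<in> Gm. tgt g = e}. \<alpha> g (?a * u (src g)))"
    by (rule trace_map_eq_sum[OF finite_Gm finite_G0 e])
  also have "\<dots> = (\<Sum>g\<in>{g \<in> Gm. tgt g = e}. \<alpha> g (coeff g (gi g)))"
    by (intro sum.cong refl) (simp add: sum_coeff_obj_mult_unit coeff_inv_eq_coeff_src)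
  also have "\<dots> = u e"
    using unit_eq_sum_coeff[OF e] by simp
  finally show "trace_map Gm G0 src tgt gi u \<alpha> e ?a = u e" .
qed

end

lemma separable_imp_trace_one:
  assumes "separable_extension S (emb ` UNIV)"
  shows "finite Gm \<and> (\<exists>a. central a \<and> (\<forall>e\<in>G0. trace_map Gm G0 src tgt gi u \<alpha> e a = u e))"
  using assms separable_elem_imp_trace_one unfolding separable_extension_def by blast

end

section \<open>A central element of trace one yields a separability element\<close>

context global_action
begin

context
  fixes a :: 'a
  assumes Gm_finite: "finite Gm" and G0_finite: "finite G0"
    and a_central: "central a"
    and trace_a: "\<forall>e\<in>G0. trace_map Gm G0 src tgt gi u \<alpha> e a = u e"
begin

definition dual_elem :: "'g \<Rightarrow> 'g \<Rightarrow> 'a" where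
  "dual_elem g = monom (gi g) (a * u (src g))"

definition separability_elem :: "('g \<Rightarrow> 'a) \<times> ('g \<Rightarrow> 'a) \<Rightarrow> int" where
  "separability_elem = (\<lambda>p. \<Sum>g\<in>Gm. single (delta g, dual_elem g) p)"

lemma dual_coeff_in_ideal: "g \<in> Gm \<Longrightarrow> a * u (src g) \<in> ideal_of u (gi g)"
  by (simp add: mem_ideal_inv_iff mult.assoc)

lemma dual_elem_in_car: "g \<in> Gm \<Longrightarrow> dual_elem g \<in> car"
  unfolding dual_elem_def by (simp add: monom_in_car dual_coeff_in_ideal)

lemma separability_elem_formal_sum: "separability_elem \<in> formal_sums S"
proof -
  have "{p. separability_elem p \<noteq> 0} \<subseteq> (\<lambda>g. (delta g, dual_elem g)) ` Gm"
  proof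
    fix p assume "p \<in> {p. separability_elem p \<noteq> 0}"
    then obtain g where "g \<in> Gm" "single (delta g, dual_elem g) p \<noteq> 0"
      unfolding separability_elem_def by (auto elim: sum.not_neutral_contains_not_neutral)
    then show "p \<in> (\<lambda>g. (delta g, dual_elem g)) ` Gm"
      unfolding single_def by (auto split: if_splits)
  qed
  then show ?thesis
    unfolding formal_sums_def using Gm_finite delta_in_car dual_elem_in_car
    by (auto intro: finite_subset)
qed

lemma delta_mult_dual_elem:
  assumes g: "g \<in> Gm"
  shows "mul (delta g) (dual_elem g) = monom (tgt g) (\<alpha> g (a * u (src g)))"
proof -
  have "\<alpha> (gi g) (u g) * (a * u (src g)) = u (src g) * a * u (src g)"
    using act_unit[of "gi g"] g by (simp add: unit_inv mult.assoc)
  also have "\<dots> = a * (u (src g) * u (src g))"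
    using unit_commute[of "src g" a] g by (simp add: mult.assoc)
  also have "\<dots> = a * u (src g)"
    using g by simp
  finally have "\<alpha> (gi g) (u g) * (a * u (src g)) = a * u (src g)" .
  moreover have "mul (delta g) (dual_elem g)
      = monom (cmp g (gi g)) (\<alpha> g (\<alpha> (gi g) (u g) * (a * u (src g))))"
    unfolding dual_elem_def using skew_mult_monom_monom[of g "gi g"] g by simp
  ultimately show ?thesis
    using g by simp
qed

lemma tensor_mult_separability_elem: "tensor_mult S separability_elem = \<one>\<^bsub>S\<^esub>"
proof
  fix k
  have "tensor_mult S separability_elem k = fs_sum separability_elem (\<lambda>p. mul (fst p) (snd p) k)"
    by (rule tensor_mult_apply[OF separability_elem_formal_sum])
  also have "\<dots> = (\<Sum>g\<in>Gm. mul (delta g) (dual_elem g) k)"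
    unfolding separability_elem_def by (simp add: fs_sum_sum_left)
  also have "\<dots> = (\<Sum>g\<in>Gm. monom (tgt g) (\<alpha> g (a * u (src g))) k)"
    by (intro sum.cong refl) (simp add: delta_mult_dual_elem)
  also have "\<dots> = (\<Sum>g\<in>{g \<in> Gm. tgt g = k}. \<alpha> g (a * u (src g)))"
    by (simp add: monom_def sum.inter_filter[OF Gm_finite] eq_commute)
  also have "\<dots> = (if k \<in> G0 then u k else 0)"
  proof (cases "k \<in> G0")
    case True
    then show ?thesis
      using trace_a trace_map_eq_sum[OF Gm_finite G0_finite] by simp
  next
    case False
    then have empty: "{g \<in> Gm. tgt g = k} = {}"
      by auto
    show ?thesis
      unfolding empty using False by simp
  qed
  finally show "tensor_mult S separability_elem k = \<one>\<^bsub>S\<^esub> k"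
    by simp
qed

definition comm_defect :: "('g \<Rightarrow> 'a) \<Rightarrow> ('g \<Rightarrow> 'a) \<times> ('g \<Rightarrow> 'a) \<Rightarrow> int" where
  "comm_defect s = (\<lambda>p. \<Sum>g\<in>Gm.
     single (mul s (delta g), dual_elem g) p - single (delta g, mul (dual_elem g) s) p)"

lemma comm_defect_zero: "comm_defect (\<lambda>j. 0) \<in> tensor_rel S (emb ` UNIV)"
  unfolding comm_defect_def
  using tensor_rel_zero_left[OF abelian_group_skew_ring] tensor_rel_zero_right[OF abelian_group_skew_ring]
  by (intro tensor_rel_sum tensor_rel_diff) (simp_all add: dual_elem_in_car delta_in_car)

lemma comm_defect_term_add:
  assumes s1: "s1 \<in> car" and s2: "s2 \<in> car" and g: "g \<in> Gm"
  shows "(\<lambda>p. (single (mul (\<lambda>j. s1 j + s2 j) (delta g), dual_elem g) p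
                - single (mul s1 (delta g), dual_elem g) p - single (mul s2 (delta g), dual_elem g) p)
            - (single (delta g, mul (dual_elem g) (\<lambda>j. s1 j + s2 j)) p
                - single (delta g, mul (dual_elem g) s1) p - single (delta g, mul (dual_elem g) s2) p))
         \<in> tensor_rel S (emb ` UNIV)"
proof (rule tensor_rel_diff)
  show "(\<lambda>p. single (mul (\<lambda>j. s1 j + s2 j) (delta g), dual_elem g) p
      - single (mul s1 (delta g), dual_elem g) p - single (mul s2 (delta g), dual_elem g) p)
      \<in> tensor_rel S (emb ` UNIV)"
    using tensor_rel.tr_addl[of "mul s1 (delta g)" S "mul s2 (delta g)" "dual_elem g"]
    by (simp add: skew_mult_add_left[OF s1 s2] skew_mult_in_car s1 s2 delta_in_car dual_elem_in_car g)
  show "(\<lambda>p. single (delta g, mul (dual_elem g) (\<lambda>j. s1 j + s2 j)) p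
      - single (delta g, mul (dual_elem g) s1) p - single (delta g, mul (dual_elem g) s2) p)
      \<in> tensor_rel S (emb ` UNIV)"
    using tensor_rel.tr_addr[of "delta g" S "mul (dual_elem g) s1" "mul (dual_elem g) s2"]
    by (simp add: skew_mult_add_right[OF dual_elem_in_car[OF g]] skew_mult_in_car s1 s2 delta_in_car
        dual_elem_in_car g)
qed

lemma comm_defect_add:
  assumes s1: "s1 \<in> car" and s2: "s2 \<in> car"
    and "comm_defect s1 \<in> tensor_rel S (emb ` UNIV)" "comm_defect s2 \<in> tensor_rel S (emb ` UNIV)"
  shows "comm_defect (\<lambda>j. s1 j + s2 j) \<in> tensor_rel S (emb ` UNIV)"
proof -
  have "(\<lambda>p. \<Sum>g\<in>Gm. (single (mul (\<lambda>j. s1 j + s2 j) (delta g), dual_elem g) p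
                - single (mul s1 (delta g), dual_elem g) p - single (mul s2 (delta g), dual_elem g) p)
            - (single (delta g, mul (dual_elem g) (\<lambda>j. s1 j + s2 j)) p
                - single (delta g, mul (dual_elem g) s1) p - single (delta g, mul (dual_elem g) s2) p))
      \<in> tensor_rel S (emb ` UNIV)"
    using comm_defect_term_add[OF s1 s2] by (rule tensor_rel_sum)
  also have "(\<lambda>p. \<Sum>g\<in>Gm. (single (mul (\<lambda>j. s1 j + s2 j) (delta g), dual_elem g) p
                - single (mul s1 (delta g), dual_elem g) p - single (mul s2 (delta g), dual_elem g) p)
            - (single (delta g, mul (dual_elem g) (\<lambda>j. s1 j + s2 j)) p
                - single (delta g, mul (dual_elem g) s1) p - single (delta g, mul (dual_elem g) s2) p))
      = (\<lambda>p. comm_defect (\<lambda>j. s1 j + s2 j) p - (comm_defect s1 p + comm_defect s2 p))"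
    unfolding comm_defect_def sum_subtractf by (rule ext) linarith
  finally have "(\<lambda>p. comm_defect (\<lambda>j. s1 j + s2 j) p - (comm_defect s1 p + comm_defect s2 p))
      \<in> tensor_rel S (emb ` UNIV)" .
  from tensor_rel.tr_add[OF this tensor_rel.tr_add[OF assms(3,4)]] show ?thesis
    by simp
qed

text \<open>The terms of \<open>c\<delta>\<^sub>k \<cdot> x\<close> and \<open>x \<cdot> c\<delta>\<^sub>k\<close> indexed by \<open>g\<close> and \<open>kg\<close> differ by moving
  \<open>\<alpha>\<^sub>(\<^sub>k\<^sub>g\<^sub>)\<^sub>\<inverse>(c)\<close> across the tensor sign.\<close>

lemma monom_defect_term:
  assumes k: "k \<in> Gm" and g: "g \<in> Gm" and c: "c \<in> ideal_of u k" and kg: "tgt g = src k"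
  shows "(\<lambda>p. single (mul (monom k c) (delta g), dual_elem g) p
     - single (delta (cmp k g), mul (dual_elem (cmp k g)) (monom k c)) p)
       \<in> tensor_rel S (emb ` UNIV)"
proof -
  let ?h = "cmp k g"
  let ?c = "\<alpha> (gi ?h) c"
  have h: "?h \<in> Gm" "src ?h = src g" "tgt ?h = tgt k"
    using k g kg by simp_all
  have ch: "c \<in> ideal_of u ?h"
    using c k h by (simp add: mem_ideal_iff)
  have c': "?c \<in> ideal_of u (gi ?h)"
    using act_in_ideal[of "gi ?h" c] ch h by simp
  have left: "mul (monom k c) (delta g) = mul (delta ?h) (emb ?c)"
    using skew_mult_monom_delta[OF k g c] skew_mult_delta_embed[OF h(1) c'] ch h kg by simp
  have "mul (dual_elem ?h) (monom k c) = monom (gi g) (a * u (src g) * ?c)"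
  proof -
    have "\<alpha> (gi ?h) (\<alpha> ?h (a * u (src ?h)) * c) = a * u (src ?h) * ?c"
      using act_mult[of "gi ?h" "\<alpha> ?h (a * u (src ?h))" c] act_in_ideal[OF h(1) dual_coeff_in_ideal[OF h(1)]]
        dual_coeff_in_ideal[OF h(1)] ch h(1) by simp
    moreover have "cmp (gi ?h) k = gi g"
      using k g kg by (simp add: inv_cmp_distrib)
    ultimately show ?thesis
      unfolding dual_elem_def using skew_mult_monom_monom[of "gi ?h" k] h k by simp
  qed
  also have "a * u (src g) * ?c = ?c * (a * u (src g))"
  proof -
    have "a * ?c = ?c * a"
      using a_central unfolding central_def by blast
    moreover have "u (src g) * ?c = ?c * u (src g)"
      using unit_commute g by simp
    ultimately show ?thesis
      by (metis mult.assoc)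
  qed
  also have "monom (gi g) (?c * (a * u (src g))) = mul (emb ?c) (dual_elem g)"
    unfolding dual_elem_def using skew_mult_embed_monom[of "gi g"] dual_coeff_in_ideal g by simp
  finally have right: "mul (dual_elem ?h) (monom k c) = mul (emb ?c) (dual_elem g)" .
  have "(\<lambda>p. single (delta ?h \<otimes>\<^bsub>S\<^esub> emb ?c, dual_elem g) p
      - single (delta ?h, emb ?c \<otimes>\<^bsub>S\<^esub> dual_elem g) p) \<in> tensor_rel S (emb ` UNIV)"
    using h g by (intro tensor_rel.tr_bal) (simp_all add: delta_in_car dual_elem_in_car)
  then show ?thesis
    using left right by simp
qed

lemma comm_defect_monom:
  assumes k: "k \<in> Gm" and c: "c \<in> ideal_of u k"
  shows "comm_defect (monom k c) \<in> tensor_rel S (emb ` UNIV)"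
proof -
  let ?A1 = "{g \<in> Gm. tgt g = src k}" and ?A2 = "{h \<in> Gm. tgt h = tgt k}"
  let ?T1 = "\<lambda>g. single (mul (monom k c) (delta g), dual_elem g)"
  let ?T2 = "\<lambda>h. single (delta h, mul (dual_elem h) (monom k c))"
  have T1: "(\<lambda>p. (\<Sum>g\<in>Gm. ?T1 g p) - (\<Sum>g\<in>?A1. ?T2 (cmp k g) p)) \<in> tensor_rel S (emb ` UNIV)"
  proof (rule tensor_rel_sum_diff_filter[OF Gm_finite])
    fix g assume "g \<in> Gm" "tgt g = src k"
    then show "(\<lambda>p. ?T1 g p - ?T2 (cmp k g) p) \<in> tensor_rel S (emb ` UNIV)"
      using monom_defect_term[OF k _ c] by simp
  next
    fix g assume g: "g \<in> Gm" "tgt g \<noteq> src k"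
    then show "?T1 g \<in> tensor_rel S (emb ` UNIV)"
      using skew_mult_monom_delta[OF k g(1) c] tensor_rel_zero_left[OF abelian_group_skew_ring, of "dual_elem g"]
      by (simp add: dual_elem_in_car)
  qed
  have T2: "(\<lambda>p. (\<Sum>h\<in>Gm. ?T2 h p) - (\<Sum>h\<in>?A2. ?T2 h p)) \<in> tensor_rel S (emb ` UNIV)"
  proof (rule tensor_rel_sum_diff_filter[OF Gm_finite])
    fix h assume h: "h \<in> Gm" "tgt h \<noteq> tgt k"
    then have "mul (dual_elem h) (monom k c) = (\<lambda>j. 0)"
      unfolding dual_elem_def using skew_mult_monom_monom[of "gi h" k] k by auto
    then show "?T2 h \<in> tensor_rel S (emb ` UNIV)"
      using h tensor_rel_zero_right[OF abelian_group_skew_ring, of "delta h"] by (simp add: delta_in_car)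
  qed (simp add: tensor_rel.tr_zero)
  have "bij_betw (cmp k) ?A1 ?A2"
    using k by (intro bij_betw_byWitness[where f' = "cmp (gi k)"]) auto
  then have "(\<Sum>g\<in>?A1. ?T2 (cmp k g) p) = (\<Sum>h\<in>?A2. ?T2 h p)" for p
    by (rule sum.reindex_bij_betw)
  then have "(\<lambda>p. ((\<Sum>g\<in>Gm. ?T1 g p) - (\<Sum>g\<in>?A1. ?T2 (cmp k g) p))
      - ((\<Sum>h\<in>Gm. ?T2 h p) - (\<Sum>h\<in>?A2. ?T2 h p))) = comm_defect (monom k c)"
    unfolding comm_defect_def by (simp add: sum_subtractf)
  then show ?thesis
    using tensor_rel_diff[OF T1 T2] by simp
qed

lemma comm_defect_in_tensor_rel:
  assumes s: "s \<in> car"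
  shows "comm_defect s \<in> tensor_rel S (emb ` UNIV)"
proof -
  let ?s = "\<lambda>K j. \<Sum>k\<in>K. monom k (s k) j"
  have "comm_defect (?s K) \<in> tensor_rel S (emb ` UNIV) \<and> ?s K \<in> car" if "K \<subseteq> Gm" for K
  proof -
    have "finite K"
      using that Gm_finite finite_subset by blast
    then show ?thesis
      using that
    proof (induction K rule: finite_subset_induct)
      case empty
      then show ?case
        using comm_defect_zero by simp
    next
      case (insert k K)
      have k: "monom k (s k) \<in> car" "comm_defect (monom k (s k)) \<in> tensor_rel S (emb ` UNIV)"
        using insert.hyps(2) car_ideal[OF s] by (simp_all add: monom_in_car comm_defect_monom)
      have "?s (insert k K) = (\<lambda>j. monom k (s k) j + ?s K j)"
        using insert.hyps by simp
      then show ?case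
        using comm_defect_add[OF k(1) _ k(2)] car_add[OF k(1)] insert.IH by simp
    qed
  qed
  moreover have "?s Gm = s"
  proof
    fix j
    show "?s Gm j = s j"
      using car_outside[OF s, of j] by (simp add: monom_def sum.delta'[OF Gm_finite])
  qed
  ultimately show ?thesis
    by (metis order_refl)
qed

lemma trace_one_imp_separable: "separable_extension S (emb ` UNIV)"
  unfolding separable_extension_def
proof (intro bexI conjI ballI)
  show "separability_elem \<in> formal_sums S"
    by (rule separability_elem_formal_sum)
  show "tensor_mult S separability_elem = \<one>\<^bsub>S\<^esub>"
    by (rule tensor_mult_separability_elem)
  fix s assume "s \<in> carrier S"
  then have "comm_defect s \<in> tensor_rel S (emb ` UNIV)"
    by (simp add: comm_defect_in_tensor_rel)
  moreover have "comm_defect s = (\<lambda>p. fs_map (\<lambda>(a, b). (s \<otimes>\<^bsub>S\<^esub> a, b)) separability_elem p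
      - fs_map (\<lambda>(a, b). (a, b \<otimes>\<^bsub>S\<^esub> s)) separability_elem p)"
    unfolding comm_defect_def separability_elem_def
    by (simp add: fs_map_sum_single[OF Gm_finite] sum_subtractf)
  ultimately show "(\<lambda>p. fs_map (\<lambda>(a, b). (s \<otimes>\<^bsub>S\<^esub> a, b)) separability_elem p
      - fs_map (\<lambda>(a, b). (a, b \<otimes>\<^bsub>S\<^esub> s)) separability_elem p) \<in> tensor_rel S (emb ` UNIV)"
    by simp
qed

end

end


theorem corollary4p2:
  fixes Gm G0 :: "'g set"
    and src tgt gi :: "'g \<Rightarrow> 'g"
    and cmp :: "'g \<Rightarrow> 'g \<Rightarrow> 'g"
    and u :: "'g \<Rightarrow> 'a::ring_1"
    and \<alpha> :: "'g \<Rightarrow> 'a \<Rightarrow> 'a"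
  assumes "groupoid Gm G0 src tgt cmp gi"
    and "groupoid_connected Gm G0 src tgt"
    and "finite G0"
    and "unital_global_action Gm G0 src tgt cmp gi u \<alpha>"
    and "(\<Sum>e\<in>G0. u e) = 1"
    and "\<forall>e\<in>G0. \<forall>f\<in>G0. e \<noteq> f \<longrightarrow> u e * u f = 0"
    and "\<forall>e\<in>G0. u e \<noteq> 0"
  shows "separable_extension (skew_groupoid_ring Gm G0 src tgt cmp gi u \<alpha>)
                             (skew_embed G0 u ` UNIV)
         \<longleftrightarrow> (finite Gm \<and>
              (\<exists>a. central a \<and> (\<forall>e\<in>G0. trace_map Gm G0 src tgt gi u \<alpha> e a = u e)))"
proof -
  interpret connected_skew_extension Gm G0 src tgt gi cmp u \<alpha>
    by unfold_locales (use assms in auto)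
  show ?thesis
    using separable_imp_trace_one trace_one_imp_separable finite_G0 by blast
qed

end
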